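(* Let $F$ be a Hilbert space and $E$ an $\mathcal{L}_{\infty}$ space. Then every mapping $f:E\rightarrow F$ that is analytic at $a\in E$ is almost $2$-summing at $a$. In particular, every entire mapping $f:E\rightarrow F$ is almost $2$-summing at every point of $E$.
   Context: $(r_j)$ are the Rademacher functions. For a finite sequence $(x_j)_{j=1}^k$ in $E$, $\Vert(x_{j})_{j=1}^k\Vert_{w,2}:=\sup_{\varphi\in B_{E'}}(\sum_{j=1}^k|\varphi(x_{j})|^{2})^{1/2}$. $f$ is almost $2$-summing at $a$ if there exist $C_a,\epsilon_a,r_a>0$ with $(\int_{0}^{1}\Vert\sum_{j=1}^{k}(f(a+x_{j})-f(a))r_{j}(t)\Vert^{2}dt)^{1/2}\leq C_{a}\Vert(x_{j})_{j=1}^{k}\Vert_{w,2}^{r_{a}}$ for all $k$ and $x_1,\dots,x_k\in E$ with $\Vert(x_{j})_{j=1}^{k}\Vert_{w,2}<\epsilon_{a}$. "Analytic at $a$" means $f(a+x)=f(a)+\sum_{k\ge1}\frac1{k!}\hat d^kf(a)(x)$ near $x=0$ with continuous $k$-homogeneous polynomials satisfying $\Vert\frac1{k!}\hat d^kf(a)\Vert\le Cc^k$; entire means analytic everywhere with the series converging on all of $E$. *)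

theory Defs
  imports "HOL-Analysis.Analysis"
begin

definition rademacher :: "nat \<Rightarrow> real \<Rightarrow> real" where
  "rademacher j t = sgn (sin (2 ^ j * pi * t))"

definition dual_ball :: "('a::real_normed_vector \<Rightarrow> real) set" where
  "dual_ball = {\<phi>. bounded_linear \<phi> \<and> onorm \<phi> \<le> 1}"

definition weak2_norm :: "nat \<Rightarrow> (nat \<Rightarrow> 'a::real_normed_vector) \<Rightarrow> real" where
  "weak2_norm k x = Sup ((\<lambda>\<phi>. sqrt (\<Sum>j\<in>{1..k}. \<bar>\<phi> (x j)\<bar>^2)) ` dual_ball)"

definition almost_2_summing_at :: "('a::real_normed_vector \<Rightarrow> 'b::real_normed_vector) \<Rightarrow> 'a \<Rightarrow> bool" where
  "almost_2_summing_at f a \<longleftrightarrow>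
     (\<exists>C \<epsilon> r. C > 0 \<and> \<epsilon> > 0 \<and> r > 0 \<and>
        (\<forall>k (x :: nat \<Rightarrow> 'a). weak2_norm k x < \<epsilon> \<longrightarrow>
           sqrt (integral {0..1} (\<lambda>t. (norm (\<Sum>j\<in>{1..k}. rademacher j t *\<^sub>R (f (a + x j) - f a)))^2))
             \<le> C * weak2_norm k x powr r))"

definition cont_multilinear :: "nat \<Rightarrow> ((nat \<Rightarrow> 'a::real_normed_vector) \<Rightarrow> 'b::real_normed_vector) \<Rightarrow> bool" where
  "cont_multilinear k A \<longleftrightarrow>
     (\<forall>v w. (\<forall>i<k. v i = w i) \<longrightarrow> A v = A w) \<and>
     (\<forall>i<k. \<forall>v. linear (\<lambda>y. A (v(i := y)))) \<and>
     (\<exists>K. \<forall>v. norm (A v) \<le> K * (\<Prod>i<k. norm (v i)))"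

definition cont_hom_poly :: "nat \<Rightarrow> ('a::real_normed_vector \<Rightarrow> 'b::real_normed_vector) \<Rightarrow> bool" where
  "cont_hom_poly k P \<longleftrightarrow> (\<exists>A. cont_multilinear k A \<and> (\<forall>x. P x = A (\<lambda>_. x)))"

definition analytic_at_pt :: "('a::real_normed_vector \<Rightarrow> 'b::real_normed_vector) \<Rightarrow> 'a \<Rightarrow> bool" where
  "analytic_at_pt f a \<longleftrightarrow>
     (\<exists>P C c \<delta>. \<delta> > 0 \<and> (\<forall>k\<ge>1. cont_hom_poly k (P k)) \<and>
        (\<forall>k\<ge>1. \<forall>x. norm (P k x) \<le> C * c ^ k * norm x ^ k) \<and>
        (\<forall>x. norm x < \<delta> \<longrightarrow> (\<lambda>k. P (Suc k) x) sums (f (a + x) - f a)))"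

definition entire_map :: "('a::real_normed_vector \<Rightarrow> 'b::real_normed_vector) \<Rightarrow> bool" where
  "entire_map f \<longleftrightarrow>
     (\<forall>a. \<exists>P C c. (\<forall>k\<ge>1. cont_hom_poly k (P k)) \<and>
        (\<forall>k\<ge>1. \<forall>x. norm (P k x) \<le> C * c ^ k * norm x ^ k) \<and>
        (\<forall>x. (\<lambda>k. P (Suc k) x) sums (f (a + x) - f a)))"

(* sup norm on l_infty^n, realised as functions nat => real supported on {..<n} *)
definition linf_norm :: "nat \<Rightarrow> (nat \<Rightarrow> real) \<Rightarrow> real" where
  "linf_norm n y = Max (insert 0 ((\<lambda>i. \<bar>y i\<bar>) ` {..<n}))"

definition fin_dim_subspace :: "'a::real_vector set \<Rightarrow> bool" where
  "fin_dim_subspace M \<longleftrightarrow> subspace M \<and> (\<exists>B. finite B \<and> M = span B)"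

(* N is lambda-isomorphic to l_infty^n: Banach-Mazur distance d(N, l_infty^n) <= lambda *)
definition close_to_linf :: "real \<Rightarrow> 'a::real_normed_vector set \<Rightarrow> bool" where
  "close_to_linf lam N \<longleftrightarrow>
     (\<exists>n T. (\<forall>x y. T (x + y) = (\<lambda>i. T x i + T y i)) \<and>
        (\<forall>c x. T (c *\<^sub>R x) = (\<lambda>i. c * T x i)) \<and> bij_betw T N {y :: nat \<Rightarrow> real. \<forall>i\<ge>n. y i = 0} \<and>
        (\<forall>x\<in>N. linf_norm n (T x) \<le> norm x \<and> norm x \<le> lam * linf_norm n (T x)))"

definition L_infty_space :: "'a::real_normed_vector itself \<Rightarrow> bool" where
  "L_infty_space _ \<longleftrightarrow>
     (\<exists>lam\<ge>1. \<forall>M :: 'a set. fin_dim_subspace M \<longrightarrow>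
        (\<exists>N. fin_dim_subspace N \<and> M \<subseteq> N \<and> close_to_linf lam N))"

end

theory Submission
  imports Defs
begin

lemma sum_PiE_insert:
  assumes "i \<notin> K"
  shows "(\<Sum>f\<in>Pi\<^sub>E (insert i K) T. F f) = (\<Sum>x\<in>T i. \<Sum>f\<in>Pi\<^sub>E K T. F (f(i := x)))"
  using inj_combinator[OF assms, of T]
  by (simp add: PiE_insert_eq sum.reindex sum.cartesian_product case_prod_unfold)

definition signs :: "'i set \<Rightarrow> ('i \<Rightarrow> real) set" where
  "signs J = J \<rightarrow>\<^sub>E {-1, 1}"

definition sign_avg :: "'i set \<Rightarrow> (('i \<Rightarrow> real) \<Rightarrow> real) \<Rightarrow> real" where
  "sign_avg J g = (\<Sum>\<epsilon>\<in>signs J. g \<epsilon>) / 2 ^ card J"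

lemma card_signs: "finite J \<Longrightarrow> card (signs J) = 2 ^ card J"
  unfolding signs_def by (simp add: card_PiE numeral_2_eq_2)

lemma signs_abs: "\<epsilon> \<in> signs J \<Longrightarrow> j \<in> J \<Longrightarrow> \<bar>\<epsilon> j\<bar> = 1"
  unfolding signs_def by (auto simp: PiE_iff)

lemma signs_iff: "\<epsilon> \<in> signs J \<longleftrightarrow> (\<forall>j\<in>J. \<bar>\<epsilon> j\<bar> = 1) \<and> \<epsilon> \<in> extensional J"
  unfolding signs_def PiE_iff by (auto simp: abs_if split: if_splits)

lemma signs_mult_self: "\<epsilon> \<in> signs J \<Longrightarrow> j \<in> J \<Longrightarrow> \<epsilon> j * \<epsilon> j = 1"
  using signs_abs by (metis abs_mult_self_eq mult_1)

lemma sign_avg_cong: "(\<And>\<epsilon>. \<epsilon> \<in> signs J \<Longrightarrow> f \<epsilon> = g \<epsilon>) \<Longrightarrow> sign_avg J f = sign_avg J g"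
  unfolding sign_avg_def by (metis (no_types, lifting) sum.cong)

lemma sign_avg_const [simp]: "finite J \<Longrightarrow> sign_avg J (\<lambda>_. c) = c"
  unfolding sign_avg_def by (simp add: card_signs)

lemma sign_avg_add: "sign_avg J (\<lambda>\<epsilon>. f \<epsilon> + g \<epsilon>) = sign_avg J f + sign_avg J g"
  unfolding sign_avg_def by (simp add: sum.distrib add_divide_distrib)

lemma sign_avg_cmult: "sign_avg J (\<lambda>\<epsilon>. c * f \<epsilon>) = c * sign_avg J f"
  unfolding sign_avg_def by (simp add: sum_distrib_left)

lemma sign_avg_sum: "sign_avg J (\<lambda>\<epsilon>. \<Sum>i\<in>I. f i \<epsilon>) = (\<Sum>i\<in>I. sign_avg J (f i))"
  unfolding sign_avg_def by (simp add: sum.swap[of _ I] sum_divide_distrib)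

lemma sign_avg_mono: "(\<And>\<epsilon>. \<epsilon> \<in> signs J \<Longrightarrow> f \<epsilon> \<le> g \<epsilon>) \<Longrightarrow> sign_avg J f \<le> sign_avg J g"
  unfolding sign_avg_def by (intro divide_right_mono sum_mono) auto

lemma sign_avg_nonneg: "(\<And>\<epsilon>. \<epsilon> \<in> signs J \<Longrightarrow> 0 \<le> f \<epsilon>) \<Longrightarrow> 0 \<le> sign_avg J f"
  unfolding sign_avg_def by (intro divide_nonneg_nonneg sum_nonneg) auto

lemma sign_avg_insert:
  assumes "finite J" "j \<notin> J"
  shows "sign_avg (insert j J) g = (sign_avg J (\<lambda>\<epsilon>. g (\<epsilon>(j := 1))) + sign_avg J (\<lambda>\<epsilon>. g (\<epsilon>(j := -1)))) / 2"
proof -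
  have "(\<Sum>\<epsilon>\<in>signs (insert j J). g \<epsilon>) = (\<Sum>s\<in>{-1, 1}. \<Sum>\<epsilon>\<in>signs J. g (\<epsilon>(j := s)))"
    unfolding signs_def by (rule sum_PiE_insert[OF assms(2)])
  then show ?thesis
    unfolding sign_avg_def using assms by (simp add: field_simps)
qed

text \<open>Flipping one sign, and multiplying all signs by a fixed sign vector, permute \<^term>\<open>signs J\<close>.\<close>

lemma sign_avg_odd:
  assumes "l \<in> J" and odd: "\<And>\<epsilon>. \<epsilon> \<in> signs J \<Longrightarrow> g (\<epsilon>(l := - \<epsilon> l)) = - g \<epsilon>"
  shows "sign_avg J g = 0"
proof -
  let ?flip = "\<lambda>\<epsilon>. \<epsilon>(l := - \<epsilon> l)"
  have "(\<Sum>\<epsilon>\<in>signs J. g \<epsilon>) = (\<Sum>\<epsilon>\<in>signs J. g (?flip \<epsilon>))"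
    by (rule sum.reindex_bij_witness[where i = ?flip and j = ?flip])
       (use \<open>l \<in> J\<close> in \<open>auto simp: signs_def PiE_iff extensional_def\<close>)
  also have "\<dots> = - (\<Sum>\<epsilon>\<in>signs J. g \<epsilon>)"
    by (simp add: odd sum_negf)
  finally show ?thesis unfolding sign_avg_def by simp
qed

lemma sign_avg_mult_invariant:
  assumes "\<delta> \<in> signs J"
  shows "sign_avg J (\<lambda>\<epsilon>. g (\<lambda>j\<in>J. \<delta> j * \<epsilon> j)) = sign_avg J g"
proof -
  let ?m = "\<lambda>\<epsilon>. \<lambda>j\<in>J. \<delta> j * \<epsilon> j"
  have mult_signs: "?m \<epsilon> \<in> signs J" if "\<epsilon> \<in> signs J" for \<epsilon>
    using assms that by (simp add: signs_iff abs_mult)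
  have "?m (?m \<epsilon>) = \<epsilon>" if "\<epsilon> \<in> signs J" for \<epsilon>
    using that signs_mult_self[OF assms] unfolding signs_def
    by (auto simp: fun_eq_iff PiE_iff extensional_def mult.assoc[symmetric])
  then show ?thesis
    unfolding sign_avg_def
    by (intro arg_cong[where f = "\<lambda>x. x / _"] sum.reindex_bij_witness[where i = ?m and j = ?m])
       (auto simp: mult_signs)
qed

lemma sign_avg_mult_signs:
  assumes "finite J" "j \<in> J" "l \<in> J"
  shows "sign_avg J (\<lambda>\<epsilon>. \<epsilon> j * \<epsilon> l) = (if j = l then 1 else 0)"
proof (cases "j = l")
  case True
  have "sign_avg J (\<lambda>\<epsilon>. \<epsilon> j * \<epsilon> l) = sign_avg J (\<lambda>_. 1)"
    by (rule sign_avg_cong) (use True assms signs_mult_self in auto)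
  then show ?thesis using True assms by simp
next
  case False
  then show ?thesis by (simp, intro sign_avg_odd[OF assms(3)]) auto
qed

lemma sign_avg_norm_sum_squared:
  fixes a :: "'i \<Rightarrow> 'b::real_inner"
  assumes "finite J"
  shows "sign_avg J (\<lambda>\<epsilon>. (norm (\<Sum>j\<in>J. \<epsilon> j *\<^sub>R a j))\<^sup>2) = (\<Sum>j\<in>J. (norm (a j))\<^sup>2)"
proof -
  have "sign_avg J (\<lambda>\<epsilon>. (norm (\<Sum>j\<in>J. \<epsilon> j *\<^sub>R a j))\<^sup>2)
      = sign_avg J (\<lambda>\<epsilon>. \<Sum>j\<in>J. \<Sum>l\<in>J. inner (a j) (a l) * (\<epsilon> j * \<epsilon> l))"
    by (rule sign_avg_cong)
       (simp add: power2_norm_eq_inner inner_sum_left inner_sum_right sum_distrib_left mult_ac inner_commute)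
  also have "\<dots> = (\<Sum>j\<in>J. \<Sum>l\<in>J. inner (a j) (a l) * sign_avg J (\<lambda>\<epsilon>. \<epsilon> j * \<epsilon> l))"
    by (simp add: sign_avg_sum sign_avg_cmult)
  also have "\<dots> = (\<Sum>j\<in>J. (norm (a j))\<^sup>2)"
    using assms by (simp add: sign_avg_mult_signs power2_norm_eq_inner if_distrib sum.delta cong: if_cong)
  finally show ?thesis .
qed

lemma sign_avg_sum_squared:
  fixes c :: "'i \<Rightarrow> real"
  assumes "finite J"
  shows "sign_avg J (\<lambda>\<epsilon>. (\<Sum>j\<in>J. \<epsilon> j * c j)\<^sup>2) = (\<Sum>j\<in>J. (c j)\<^sup>2)"
  using sign_avg_norm_sum_squared[OF assms, of c] by simp

lemma sign_avg_Cauchy_Schwarz: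
  assumes "finite J"
  shows "sign_avg J (\<lambda>\<epsilon>. f \<epsilon> * g \<epsilon>) \<le> sqrt (sign_avg J (\<lambda>\<epsilon>. (f \<epsilon>)\<^sup>2)) * sqrt (sign_avg J (\<lambda>\<epsilon>. (g \<epsilon>)\<^sup>2))"
proof -
  let ?N = "2 ^ card J :: real"
  have "(\<Sum>\<epsilon>\<in>signs J. f \<epsilon> * g \<epsilon>) \<le> sqrt ((\<Sum>\<epsilon>\<in>signs J. f \<epsilon> * g \<epsilon>)\<^sup>2)"
    by simp
  also have "\<dots> \<le> sqrt ((\<Sum>\<epsilon>\<in>signs J. (f \<epsilon>)\<^sup>2) * (\<Sum>\<epsilon>\<in>signs J. (g \<epsilon>)\<^sup>2))"
    by (intro real_sqrt_le_mono Cauchy_Schwarz_ineq_sum)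
  finally have "(\<Sum>\<epsilon>\<in>signs J. f \<epsilon> * g \<epsilon>) / ?N
      \<le> sqrt ((\<Sum>\<epsilon>\<in>signs J. (f \<epsilon>)\<^sup>2) / ?N) * sqrt ((\<Sum>\<epsilon>\<in>signs J. (g \<epsilon>)\<^sup>2) / ?N)"
    by (simp add: divide_right_mono real_sqrt_divide real_sqrt_mult[symmetric])
  then show ?thesis unfolding sign_avg_def .
qed

lemma sign_avg_fourth_moment:
  fixes c :: "'i \<Rightarrow> real"
  assumes "finite J"
  shows "sign_avg J (\<lambda>\<epsilon>. (\<Sum>j\<in>J. \<epsilon> j * c j) ^ 4) \<le> 3 * (\<Sum>j\<in>J. (c j)\<^sup>2)\<^sup>2"
  using assms
proof (induction J rule: finite_induct)
  case empty
  then show ?case by simp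
next
  case (insert j J)
  define S where "S \<epsilon> = (\<Sum>i\<in>J. \<epsilon> i * c i)" for \<epsilon>
  define \<sigma> where "\<sigma> = (\<Sum>i\<in>J. (c i)\<^sup>2)"
  have upd: "(\<Sum>i\<in>insert j J. (\<epsilon>(j := s)) i * c i) = s * c j + S \<epsilon>" for \<epsilon> s
  proof -
    have "(\<Sum>i\<in>J. (\<epsilon>(j := s)) i * c i) = S \<epsilon>"
      unfolding S_def using insert.hyps by (intro sum.cong) auto
    then show ?thesis using insert.hyps by simp
  qed
  have quartic: "((x + s) ^ 4 + (- x + s) ^ 4) / 2 = s ^ 4 + 6 * x\<^sup>2 * s\<^sup>2 + x ^ 4" for x s :: real
    by algebra
  have "sign_avg (insert j J) (\<lambda>\<epsilon>. (\<Sum>i\<in>insert j J. \<epsilon> i * c i) ^ 4)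
      = (sign_avg J (\<lambda>\<epsilon>. (c j + S \<epsilon>) ^ 4) + sign_avg J (\<lambda>\<epsilon>. (- c j + S \<epsilon>) ^ 4)) / 2"
    unfolding sign_avg_insert[OF insert.hyps] upd by simp
  also have "\<dots> = sign_avg J (\<lambda>\<epsilon>. S \<epsilon> ^ 4 + 6 * (c j)\<^sup>2 * (S \<epsilon>)\<^sup>2 + (c j) ^ 4)"
    unfolding quartic[symmetric] sign_avg_add[symmetric] 
    using sign_avg_cmult[of J "1/2" "\<lambda>\<epsilon>. (c j + S \<epsilon>) ^ 4 + (- c j + S \<epsilon>) ^ 4"] by simp
  also have "\<dots> = sign_avg J (\<lambda>\<epsilon>. S \<epsilon> ^ 4) + 6 * (c j)\<^sup>2 * \<sigma> + (c j) ^ 4"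
    using insert.hyps
    by (simp add: sign_avg_add sign_avg_cmult S_def \<sigma>_def sign_avg_sum_squared)
  also have "\<dots> \<le> 3 * \<sigma>\<^sup>2 + 6 * (c j)\<^sup>2 * \<sigma> + (c j) ^ 4"
    using insert.IH unfolding S_def \<sigma>_def by simp
  also have "\<dots> \<le> 3 * ((c j)\<^sup>2 + \<sigma>)\<^sup>2"
  proof -
    have "3 * ((c j)\<^sup>2 + \<sigma>)\<^sup>2 = 3 * \<sigma>\<^sup>2 + 6 * (c j)\<^sup>2 * \<sigma> + 3 * (c j) ^ 4"
      by algebra
    then show ?thesis by simp
  qed
  finally show ?case
    using insert.hyps unfolding \<sigma>_def by simp
qed

lemma sign_avg_square_le_Hoelder:
  assumes "finite J"
  shows "sign_avg J (\<lambda>\<epsilon>. (f \<epsilon>)\<^sup>2)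
    \<le> sqrt (sign_avg J (\<lambda>\<epsilon>. \<bar>f \<epsilon>\<bar>)) * sqrt (sign_avg J (\<lambda>\<epsilon>. \<bar>f \<epsilon>\<bar> ^ 3))"
proof -
  have "sign_avg J (\<lambda>\<epsilon>. (f \<epsilon>)\<^sup>2) = sign_avg J (\<lambda>\<epsilon>. sqrt \<bar>f \<epsilon>\<bar> * (\<bar>f \<epsilon>\<bar> * sqrt \<bar>f \<epsilon>\<bar>))"
  proof (rule sign_avg_cong)
    fix \<epsilon>
    have "sqrt \<bar>f \<epsilon>\<bar> * (\<bar>f \<epsilon>\<bar> * sqrt \<bar>f \<epsilon>\<bar>) = \<bar>f \<epsilon>\<bar> * (sqrt \<bar>f \<epsilon>\<bar> * sqrt \<bar>f \<epsilon>\<bar>)"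
      by (simp add: mult_ac)
    then show "(f \<epsilon>)\<^sup>2 = sqrt \<bar>f \<epsilon>\<bar> * (\<bar>f \<epsilon>\<bar> * sqrt \<bar>f \<epsilon>\<bar>)"
      by (simp add: power2_eq_square)
  qed
  also have "\<dots> \<le> sqrt (sign_avg J (\<lambda>\<epsilon>. (sqrt \<bar>f \<epsilon>\<bar>)\<^sup>2)) * sqrt (sign_avg J (\<lambda>\<epsilon>. (\<bar>f \<epsilon>\<bar> * sqrt \<bar>f \<epsilon>\<bar>)\<^sup>2))"
    by (rule sign_avg_Cauchy_Schwarz[OF assms])
  also have "sign_avg J (\<lambda>\<epsilon>. (sqrt \<bar>f \<epsilon>\<bar>)\<^sup>2) = sign_avg J (\<lambda>\<epsilon>. \<bar>f \<epsilon>\<bar>)"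
    by (rule sign_avg_cong) simp
  also have "sign_avg J (\<lambda>\<epsilon>. (\<bar>f \<epsilon>\<bar> * sqrt \<bar>f \<epsilon>\<bar>)\<^sup>2) = sign_avg J (\<lambda>\<epsilon>. \<bar>f \<epsilon>\<bar> ^ 3)"
  proof (rule sign_avg_cong)
    fix \<epsilon>
    have "(\<bar>f \<epsilon>\<bar> * sqrt \<bar>f \<epsilon>\<bar>)\<^sup>2 = \<bar>f \<epsilon>\<bar>\<^sup>2 * (sqrt \<bar>f \<epsilon>\<bar>)\<^sup>2"
      by (rule power_mult_distrib)
    then show "(\<bar>f \<epsilon>\<bar> * sqrt \<bar>f \<epsilon>\<bar>)\<^sup>2 = \<bar>f \<epsilon>\<bar> ^ 3"
      by (simp add: power2_eq_square power3_eq_cube)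
  qed
  finally show ?thesis .
qed

lemma sign_avg_abs_cube_le:
  fixes c :: "'i \<Rightarrow> real"
  assumes "finite J"
  shows "sign_avg J (\<lambda>\<epsilon>. \<bar>\<Sum>j\<in>J. \<epsilon> j * c j\<bar> ^ 3) \<le> sqrt 3 * sqrt (\<Sum>j\<in>J. (c j)\<^sup>2) ^ 3"
proof -
  define S where "S \<epsilon> = (\<Sum>j\<in>J. \<epsilon> j * c j)" for \<epsilon>
  define \<sigma> where "\<sigma> = sqrt (\<Sum>j\<in>J. (c j)\<^sup>2)"
  have \<sigma>: "\<sigma> \<ge> 0"
    unfolding \<sigma>_def by (auto intro: sum_nonneg)
  have m2: "sign_avg J (\<lambda>\<epsilon>. (S \<epsilon>)\<^sup>2) = \<sigma>\<^sup>2"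
    unfolding S_def \<sigma>_def sign_avg_sum_squared[OF assms] by (simp add: sum_nonneg)
  have m4: "sign_avg J (\<lambda>\<epsilon>. ((S \<epsilon>)\<^sup>2)\<^sup>2) \<le> 3 * (\<sigma>\<^sup>2)\<^sup>2"
    using sign_avg_fourth_moment[OF assms, of c]
    unfolding S_def \<sigma>_def by (simp add: sum_nonneg power_mult[symmetric])
  have "sign_avg J (\<lambda>\<epsilon>. \<bar>S \<epsilon>\<bar> ^ 3) = sign_avg J (\<lambda>\<epsilon>. \<bar>S \<epsilon>\<bar> * (S \<epsilon>)\<^sup>2)"
    by (rule sign_avg_cong) (simp add: power2_eq_square power3_eq_cube)
  also have "\<dots> \<le> sqrt (sign_avg J (\<lambda>\<epsilon>. \<bar>S \<epsilon>\<bar>\<^sup>2)) * sqrt (sign_avg J (\<lambda>\<epsilon>. ((S \<epsilon>)\<^sup>2)\<^sup>2))"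
    by (rule sign_avg_Cauchy_Schwarz[OF assms])
  also have "\<dots> \<le> \<sigma> * (sqrt 3 * \<sigma>\<^sup>2)"
  proof (rule mult_mono)
    show "sqrt (sign_avg J (\<lambda>\<epsilon>. \<bar>S \<epsilon>\<bar>\<^sup>2)) \<le> \<sigma>"
      using m2 \<sigma> by simp
    have "sqrt (sign_avg J (\<lambda>\<epsilon>. ((S \<epsilon>)\<^sup>2)\<^sup>2)) \<le> sqrt (3 * (\<sigma>\<^sup>2)\<^sup>2)"
      using m4 by (rule real_sqrt_le_mono)
    then show "sqrt (sign_avg J (\<lambda>\<epsilon>. ((S \<epsilon>)\<^sup>2)\<^sup>2)) \<le> sqrt 3 * \<sigma>\<^sup>2"
      by (simp only: real_sqrt_mult real_sqrt_abs abs_power2)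
  qed (use \<sigma> in \<open>auto intro: sign_avg_nonneg\<close>)
  finally show ?thesis
    unfolding S_def \<sigma>_def by (simp add: power2_eq_square power3_eq_cube mult_ac)
qed

text \<open>The constant \<open>\<surd>3\<close> comes from the fourth moment bound
  through the Hoelder-type estimates \<open>E S\<^sup>2 \<le> (E \<bar>S\<bar>)\<^sup>1\<^sup>/\<^sup>2 (E \<bar>S\<bar>\<^sup>3)\<^sup>1\<^sup>/\<^sup>2\<close> and \<open>E \<bar>S\<bar>\<^sup>3 \<le> (E S\<^sup>2)\<^sup>1\<^sup>/\<^sup>2 (E S\<^sup>4)\<^sup>1\<^sup>/\<^sup>2\<close>.\<close>

lemma khintchine_inequality:
  fixes c :: "'i \<Rightarrow> real"
  assumes "finite J"
  shows "sqrt (\<Sum>j\<in>J. (c j)\<^sup>2) \<le> sqrt 3 * sign_avg J (\<lambda>\<epsilon>. \<bar>\<Sum>j\<in>J. \<epsilon> j * c j\<bar>)"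
proof -
  define \<sigma> where "\<sigma> = sqrt (\<Sum>j\<in>J. (c j)\<^sup>2)"
  define a where "a = sign_avg J (\<lambda>\<epsilon>. \<bar>\<Sum>j\<in>J. \<epsilon> j * c j\<bar>)"
  have \<sigma>: "\<sigma> \<ge> 0" and a: "a \<ge> 0"
    unfolding \<sigma>_def a_def by (auto intro: sign_avg_nonneg sum_nonneg)
  have "\<sigma>\<^sup>2 = sign_avg J (\<lambda>\<epsilon>. (\<Sum>j\<in>J. \<epsilon> j * c j)\<^sup>2)"
    unfolding \<sigma>_def sign_avg_sum_squared[OF assms] by (simp add: sum_nonneg)
  also have "\<dots> \<le> sqrt a * sqrt (sign_avg J (\<lambda>\<epsilon>. \<bar>\<Sum>j\<in>J. \<epsilon> j * c j\<bar> ^ 3))"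
    unfolding a_def by (rule sign_avg_square_le_Hoelder[OF assms])
  also have "\<dots> \<le> sqrt a * sqrt (sqrt 3 * \<sigma> ^ 3)"
    using sign_avg_abs_cube_le[OF assms, of c] a unfolding \<sigma>_def
    by (intro mult_left_mono real_sqrt_le_mono) auto
  finally have "(\<sigma>\<^sup>2)\<^sup>2 \<le> (sqrt a * sqrt (sqrt 3 * \<sigma> ^ 3))\<^sup>2"
    using \<sigma> by (intro power_mono) auto
  also have "\<dots> = a * (sqrt 3 * \<sigma> ^ 3)"
    using a \<sigma> by (simp add: power_mult_distrib)
  finally have "\<sigma> * \<sigma> ^ 3 \<le> (sqrt 3 * a) * \<sigma> ^ 3"
    by (simp add: power2_eq_square power3_eq_cube mult_ac)
  then have "\<sigma> \<le> sqrt 3 * a"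
    using \<sigma> a by (cases "\<sigma> = 0") (auto simp: mult_le_cancel_right)
  then show ?thesis unfolding \<sigma>_def a_def .
qed

lemma sign_avg_norm_sum_le:
  fixes a :: "'i \<Rightarrow> 'b::real_inner"
  assumes "finite J"
  shows "sign_avg J (\<lambda>\<epsilon>. norm (\<Sum>j\<in>J. \<epsilon> j *\<^sub>R a j)) \<le> sqrt (\<Sum>j\<in>J. (norm (a j))\<^sup>2)"
  using sign_avg_Cauchy_Schwarz[OF assms, of "\<lambda>\<epsilon>. norm (\<Sum>j\<in>J. \<epsilon> j *\<^sub>R a j)" "\<lambda>_. 1"] assms
  by (simp add: sign_avg_norm_sum_squared)

lemma integral_unit_interval_halves:
  fixes h :: "real \<Rightarrow> real"
  assumes h: "h integrable_on {0..1}"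
  shows "integral {0..1} h
    = (integral {0..1} (\<lambda>t. h (t / 2)) + integral {0..1} (\<lambda>t. h (t / 2 + 1 / 2))) / 2"
proof -
  have affine: "integral {0..1} (\<lambda>t. h (t / 2 + c)) = 2 * integral {c..c + 1 / 2} h"
    if "0 \<le> c" "c + 1 / 2 \<le> 1" for c :: real
  proof -
    have "h integrable_on {c..c + 1 / 2}"
      by (rule integrable_on_subinterval[OF h]) (use that in auto)
    then have "(h has_integral integral (cbox c (c + 1 / 2)) h) (cbox c (c + 1 / 2))"
      unfolding cbox_interval by (rule integrable_integral)
    then have "((\<lambda>t. h ((1 / 2) *\<^sub>R t + c)) has_integral (integral (cbox c (c + 1 / 2)) h /\<^sub>R (1 / 2) ^ DIM(real)))
        (cbox ((c - c) /\<^sub>R (1 / 2)) ((c + 1 / 2 - c) /\<^sub>R (1 / 2)))"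
      by (rule has_integral_affinity') simp
    then show ?thesis by (simp add: integral_unique)
  qed
  have "integral {0..1} h = integral {0..1 / 2} h + integral {1 / 2..1} h"
    using Henstock_Kurzweil_Integration.integral_combine[where a = 0 and c = "1 / 2" and b = 1 and f = h] h by simp
  then show ?thesis
    using affine[of 0] affine[of "1 / 2"] by (simp add: field_simps)
qed

lemma rademacher_Suc_half: "rademacher (Suc j) (t / 2) = rademacher j t"
  unfolding rademacher_def by (simp add: mult_ac)

lemma rademacher_Suc_half_shift:
  "rademacher (Suc j) (t / 2 + 1 / 2) = (if j = 0 then -1 else 1) * rademacher j t"
proof (cases j)
  case 0
  have "sin (2 * pi * (t / 2 + 1 / 2)) = - sin (pi * t)"
    by (simp add: algebra_simps sin_add)
  then show ?thesis using 0 unfolding rademacher_def by (simp add: sgn_minus)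
next
  case (Suc i)
  have "2 ^ Suc j * pi * (t / 2 + 1 / 2) = 2 ^ j * pi * t + 2 * real (2 ^ i) * pi"
    using Suc by (simp add: algebra_simps)
  then have "sin (2 ^ Suc j * pi * (t / 2 + 1 / 2)) = sin (2 ^ j * pi * t)"
    by (simp only: sin_add sin_2npi cos_2npi)
  then show ?thesis using Suc unfolding rademacher_def by simp
qed

lemma abs_rademacher_le: "\<bar>rademacher j t\<bar> \<le> 1"
  unfolding rademacher_def by (simp add: abs_sgn_eq)

lemma rademacher_measurable: "rademacher j \<in> borel_measurable (lebesgue_on {0..1})"
proof -
  have "(\<lambda>t. sin (2 ^ j * pi * t)) \<in> borel_measurable (lebesgue_on {0..1})"
    by (intro continuous_imp_measurable_on_sets_lebesgue) (auto intro!: continuous_intros)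
  then show ?thesis
    unfolding rademacher_def[abs_def] by (rule measurable_compose[OF _ borel_measurable_sgn])
qed

lemma rademacher_integrable: "rademacher j integrable_on {0..1}"
  by (rule measurable_bounded_by_integrable_imp_integrable[where g = "\<lambda>_. 1"])
     (auto simp: rademacher_measurable abs_rademacher_le)

lemma rademacher_mult_integrable: "(\<lambda>t. rademacher j t * rademacher l t) integrable_on {0..1}"
proof (rule measurable_bounded_by_integrable_imp_integrable)
  show "(\<lambda>t. rademacher j t * rademacher l t) \<in> borel_measurable (lebesgue_on {0..1})"
    using rademacher_measurable[of j] rademacher_measurable[of l] by measurable
  show "norm (rademacher j t * rademacher l t) \<le> 1" for t
    using abs_rademacher_le[of j t] abs_rademacher_le[of l t] by (simp add: abs_mult mult_le_one)
qed auto

lemma integral_rademacher_0_mult: "integral {0..1} (\<lambda>t. rademacher 0 t * g t) = integral {0..1} g"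
proof (rule integral_spike[of "{0, 1}"])
  fix t :: real assume "t \<in> {0..1} - {0, 1}"
  then have "sin (pi * t) > 0" by (intro sin_gt_zero) auto
  then show "g t = rademacher 0 t * g t" unfolding rademacher_def by simp
qed auto

lemma integral_rademacher_Suc: "integral {0..1} (rademacher (Suc l)) = 0"
proof (induction l)
  case 0
  show ?case
    by (subst integral_unit_interval_halves[OF rademacher_integrable])
       (simp add: rademacher_Suc_half rademacher_Suc_half_shift integral_neg rademacher_integrable)
next
  case (Suc l)
  then show ?case
    by (subst integral_unit_interval_halves[OF rademacher_integrable])
       (simp add: rademacher_Suc_half rademacher_Suc_half_shift)
qed

lemma rademacher_orthonormal:
  "integral {0..1} (\<lambda>t. rademacher j t * rademacher l t) = (if j = l then 1 else 0)"
proof (induction j arbitrary: l)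
  case 0
  have "integral {0..1} (rademacher 0) = 1"
    using integral_rademacher_0_mult[of "\<lambda>_. 1"] by simp
  then show ?case
    using integral_rademacher_0_mult[of "rademacher l"] integral_rademacher_Suc
    by (cases l) auto
next
  case (Suc j)
  show ?case
  proof (cases l)
    case 0
    then show ?thesis
      using integral_rademacher_0_mult[of "rademacher (Suc j)"] integral_rademacher_Suc
      by (simp add: mult.commute)
  next
    case (Suc l')
    define s where "s i = (if i = 0 then -1 else 1 :: real)" for i :: nat
    have "integral {0..1} (\<lambda>t. rademacher (Suc j) t * rademacher (Suc l') t)
      = (integral {0..1} (\<lambda>t. rademacher j t * rademacher l' t)
         + integral {0..1} (\<lambda>t. (s j * s l') * (rademacher j t * rademacher l' t))) / 2"
      by (subst integral_unit_interval_halves[OF rademacher_mult_integrable])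
         (simp add: rademacher_Suc_half rademacher_Suc_half_shift s_def mult_ac)
    also have "\<dots> = (1 + s j * s l') / 2 * (if j = l' then 1 else 0)"
      using Suc.IH[of l'] by (simp add: field_simps)
    finally show ?thesis
      using Suc by (cases "l' = 0") (auto simp: s_def)
  qed
qed

lemma integral_norm_rademacher_sum_squared:
  fixes y :: "nat \<Rightarrow> 'b::real_inner"
  assumes J: "finite J"
  shows "integral {0..1} (\<lambda>t. (norm (\<Sum>j\<in>J. rademacher j t *\<^sub>R y j))\<^sup>2) = (\<Sum>j\<in>J. (norm (y j))\<^sup>2)"
proof -
  have int: "(\<lambda>t. inner (y j) (y l) * (rademacher j t * rademacher l t)) integrable_on {0..1}" for j l
    by (rule integrable_on_mult_right[OF rademacher_mult_integrable])
  have "integral {0..1} (\<lambda>t. (norm (\<Sum>j\<in>J. rademacher j t *\<^sub>R y j))\<^sup>2)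
      = integral {0..1} (\<lambda>t. \<Sum>j\<in>J. \<Sum>l\<in>J. inner (y j) (y l) * (rademacher j t * rademacher l t))"
    by (simp add: power2_norm_eq_inner inner_sum_left inner_sum_right sum_distrib_left mult_ac inner_commute)
  also have "\<dots> = (\<Sum>j\<in>J. \<Sum>l\<in>J. inner (y j) (y l) * integral {0..1} (\<lambda>t. rademacher j t * rademacher l t))"
    using J int by (simp add: integral_sum integrable_sum)
  also have "\<dots> = (\<Sum>j\<in>J. (norm (y j))\<^sup>2)"
    using J by (simp add: rademacher_orthonormal power2_norm_eq_inner if_distrib sum.delta cong: if_cong)
  finally show ?thesis .
qed

lemma subspace_Union_chain:
  assumes "C \<noteq> {}" "\<And>S. S \<in> C \<Longrightarrow> subspace S" "\<And>S T. S \<in> C \<Longrightarrow> T \<in> C \<Longrightarrow> S \<subseteq> T \<or> T \<subseteq> S"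
  shows "subspace (\<Union>C)"
  unfolding subspace_def
proof (intro conjI ballI allI)
  obtain S where "S \<in> C" using assms(1) by blast
  then show "0 \<in> \<Union>C" using assms(2) subspace_0 by blast
next
  fix x y assume "x \<in> \<Union>C" "y \<in> \<Union>C"
  then obtain S T where ST: "S \<in> C" "T \<in> C" "x \<in> S" "y \<in> T" by blast
  from assms(3)[OF ST(1,2)] show "x + y \<in> \<Union>C"
  proof
    assume "S \<subseteq> T"
    then have "x + y \<in> T" using ST assms(2)[of T] subspace_add by blast
    then show ?thesis using ST by blast
  next
    assume "T \<subseteq> S"
    then have "x + y \<in> S" using ST assms(2)[of S] subspace_add by blast
    then show ?thesis using ST by blast
  qed
next
  fix c x assume "x \<in> \<Union>C"
  then obtain S where "S \<in> C" "x \<in> S" by blast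
  then show "c *\<^sub>R x \<in> \<Union>C" using assms(2)[of S] subspace_scale by blast
qed

definition norm_dominated_graph :: "('a::real_normed_vector \<times> real) set \<Rightarrow> bool" where
  "norm_dominated_graph G \<longleftrightarrow> subspace G \<and> (\<forall>x a. (x, a) \<in> G \<longrightarrow> a \<le> norm x)"

lemma norm_dominated_graph_extension_value:
  assumes "norm_dominated_graph M"
  obtains c where "\<And>x a. (x, a) \<in> M \<Longrightarrow> a - norm (x - x0) \<le> c"
    and "\<And>z b. (z, b) \<in> M \<Longrightarrow> c \<le> norm (z + x0) - b"
proof -
  have sM: "subspace M" and bnd: "\<And>x a. (x, a) \<in> M \<Longrightarrow> a \<le> norm x"
    using assms unfolding norm_dominated_graph_def by auto
  have cross: "a - norm (x - x0) \<le> norm (z + x0) - b" if "(x, a) \<in> M" "(z, b) \<in> M" for x a z b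
  proof -
    have "(x + z, a + b) \<in> M"
      using subspace_add[OF sM that] by simp
    then have "a + b \<le> norm ((x - x0) + (z + x0))"
      using bnd by (simp add: algebra_simps)
    then show ?thesis using norm_triangle_ineq[of "x - x0" "z + x0"] by simp
  qed
  define L where "L = {a - norm (x - x0) | x a. (x, a) \<in> M}"
  have "(0, 0) \<in> M" using subspace_0[OF sM] by (simp add: zero_prod_def)
  then have L: "L \<noteq> {}" "bdd_above L"
    unfolding L_def bdd_above_def using cross by fastforce+
  show ?thesis
  proof (rule that[of "Sup L"])
    show "a - norm (x - x0) \<le> Sup L" if "(x, a) \<in> M" for x a
      by (rule cSup_upper[OF _ L(2)]) (use that L_def in blast)
    show "Sup L \<le> norm (z + x0) - b" if "(z, b) \<in> M" for z b
      by (rule cSup_least[OF L(1)]) (use cross[OF _ that] L_def in blast)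
  qed
qed

lemma norm_dominated_graph_extend:
  assumes M: "norm_dominated_graph M"
  obtains c where "norm_dominated_graph (span (insert (x0, c) M))"
proof -
  have sM: "subspace M" and bnd: "\<And>x a. (x, a) \<in> M \<Longrightarrow> a \<le> norm x"
    using M unfolding norm_dominated_graph_def by auto
  have scale: "(r *\<^sub>R x, r * a) \<in> M" if "(x, a) \<in> M" for r x a
    using subspace_scale[OF sM that, of r] by simp
  obtain c where c_lower: "\<And>x a. (x, a) \<in> M \<Longrightarrow> a - norm (x - x0) \<le> c"
    and c_upper: "\<And>z b. (z, b) \<in> M \<Longrightarrow> c \<le> norm (z + x0) - b"
    using norm_dominated_graph_extension_value[OF M] by blast
  have "e \<le> norm y" if "(y, e) - t *\<^sub>R (x0, c) \<in> M" for y e t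
  proof -
    have ye: "(y - t *\<^sub>R x0, e - t * c) \<in> M" using that by simp
    consider "t = 0" | "t > 0" | "t < 0" by linarith
    then show ?thesis
    proof cases
      case 1
      then show ?thesis using bnd[OF ye] by simp
    next
      case 2
      have "c \<le> norm ((1 / t) *\<^sub>R (y - t *\<^sub>R x0) + x0) - (1 / t) * (e - t * c)"
        using c_upper[OF scale[OF ye]] .
      also have "\<dots> = (norm y - e) / t + c"
        using 2 by (simp add: algebra_simps diff_divide_distrib)
      finally show ?thesis using 2 by (simp add: zero_le_divide_iff)
    next
      case 3
      have "(1 / - t) * (e - t * c) - norm ((1 / - t) *\<^sub>R (y - t *\<^sub>R x0) - x0) \<le> c"
        using c_lower[OF scale[OF ye]] .
      moreover have "(1 / - t) * (e - t * c) - norm ((1 / - t) *\<^sub>R (y - t *\<^sub>R x0) - x0) = (e - norm y) / - t + c"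
        using 3 by (simp add: algebra_simps diff_divide_distrib)
      ultimately show ?thesis using 3 by (simp add: zero_le_divide_iff)
    qed
  qed
  then have "\<forall>y e. (y, e) \<in> span (insert (x0, c) M) \<longrightarrow> e \<le> norm y"
    unfolding span_insert span_eq_iff[THEN iffD2, OF sM] by auto
  then show ?thesis
    by (intro that) (simp add: norm_dominated_graph_def)
qed

lemma norm_dominated_graph_Zorn:
  assumes "norm_dominated_graph G0"
  obtains M where "norm_dominated_graph M" "G0 \<subseteq> M"
    and "\<And>G. norm_dominated_graph G \<Longrightarrow> M \<subseteq> G \<Longrightarrow> G = M"
proof -
  let ?A = "{G. norm_dominated_graph G \<and> G0 \<subseteq> G}"
  have "\<forall>C\<in>chains ?A. \<exists>U\<in>?A. \<forall>X\<in>C. X \<subseteq> U"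
  proof
    fix C assume C: "C \<in> chains ?A"
    show "\<exists>U\<in>?A. \<forall>X\<in>C. X \<subseteq> U"
    proof (cases "C = {}")
      case True
      then show ?thesis using assms by blast
    next
      case False
      have CA: "C \<subseteq> ?A" by (rule chainsD2[OF C])
      have "subspace (\<Union>C)"
      proof (rule subspace_Union_chain[OF False])
        show "subspace S" if "S \<in> C" for S
          using CA that unfolding norm_dominated_graph_def by blast
        show "S \<subseteq> T \<or> T \<subseteq> S" if "S \<in> C" "T \<in> C" for S T
          by (rule chainsD[OF C that])
      qed
      moreover have "a \<le> norm x" if "(x, a) \<in> \<Union>C" for x a
        using CA that unfolding norm_dominated_graph_def by blast
      moreover have "G0 \<subseteq> \<Union>C"
        using CA False by blast
      ultimately have "\<Union>C \<in> ?A"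
        unfolding norm_dominated_graph_def by blast
      then show ?thesis by blast
    qed
  qed
  then obtain M where "M \<in> ?A" and max: "\<forall>G\<in>?A. M \<subseteq> G \<longrightarrow> G = M"
    by (meson Zorn_Lemma2)
  show ?thesis
  proof (rule that)
    show "norm_dominated_graph M" "G0 \<subseteq> M"
      using \<open>M \<in> ?A\<close> by auto
    show "G = M" if "norm_dominated_graph G" "M \<subseteq> G" for G
      using max \<open>M \<in> ?A\<close> that by blast
  qed
qed

lemma norm_dominated_graph_unique:
  assumes "norm_dominated_graph M" "(x, a) \<in> M" "(x, b) \<in> M"
  shows "a = b"
proof -
  have sM: "subspace M" and bnd: "\<And>x a. (x, a) \<in> M \<Longrightarrow> a \<le> norm x"
    using assms(1) unfolding norm_dominated_graph_def by auto
  have "(0, a - b) \<in> M" "(0, b - a) \<in> M"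
    using subspace_diff[OF sM assms(2,3)] subspace_diff[OF sM assms(3,2)] by simp_all
  then show ?thesis using bnd[of 0 "a - b"] bnd[of 0 "b - a"] by simp
qed

lemma maximal_norm_dominated_graph_functional:
  assumes M: "norm_dominated_graph M"
    and max: "\<And>G. norm_dominated_graph G \<Longrightarrow> M \<subseteq> G \<Longrightarrow> G = M"
  shows "\<exists>\<psi>\<in>dual_ball. \<forall>x a. (x, a) \<in> M \<longrightarrow> \<psi> x = a"
proof -
  have sM: "subspace M" and bnd: "\<And>x a. (x, a) \<in> M \<Longrightarrow> a \<le> norm x"
    using M unfolding norm_dominated_graph_def by auto
  have "\<exists>a. (x, a) \<in> M" for x
  proof -
    obtain c where G: "norm_dominated_graph (span (insert (x, c) M))"
      using norm_dominated_graph_extend[OF M] .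
    have "M \<subseteq> span (insert (x, c) M)"
      by (rule subset_trans[OF subset_insertI span_superset])
    then have "(x, c) \<in> M"
      using max[OF G] span_base[of "(x, c)" "insert (x, c) M"] by simp
    then show ?thesis ..
  qed
  then have unique_value: "\<exists>!a. (x, a) \<in> M" for x
    using norm_dominated_graph_unique[OF M] by blast
  define \<psi> where "\<psi> x = (THE a. (x, a) \<in> M)" for x
  have graph: "(x, \<psi> x) \<in> M" for x
    unfolding \<psi>_def by (rule theI'[OF unique_value])
  have \<psi>_eq: "\<psi> x = a" if "(x, a) \<in> M" for x a
    using norm_dominated_graph_unique[OF M graph that] .
  have \<psi>_add: "\<psi> (x + y) = \<psi> x + \<psi> y" for x y
    using subspace_add[OF sM graph graph] by (intro \<psi>_eq) simp
  have \<psi>_scale: "\<psi> (c *\<^sub>R x) = c * \<psi> x" for c x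
    using subspace_scale[OF sM graph] by (intro \<psi>_eq) simp
  have \<psi>_le: "norm (\<psi> x) \<le> norm x" for x
    using bnd[OF graph, of x] bnd[OF graph, of "- x"] \<psi>_scale[of "-1" x] by simp
  have "bounded_linear \<psi>"
    using \<psi>_le by (intro bounded_linear_intro[of \<psi> 1] \<psi>_add) (simp_all add: \<psi>_scale)
  moreover have "onorm \<psi> \<le> 1"
    using \<psi>_le by (intro onorm_bound) simp_all
  ultimately show ?thesis
    unfolding dual_ball_def using \<psi>_eq by blast
qed

lemma subspace_graph:
  assumes S: "subspace S"
    and add: "\<And>x y. x \<in> S \<Longrightarrow> y \<in> S \<Longrightarrow> \<phi> (x + y) = \<phi> x + \<phi> y"
    and scale: "\<And>c x. x \<in> S \<Longrightarrow> \<phi> (c *\<^sub>R x) = c * \<phi> x"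
  shows "subspace ((\<lambda>x. (x, \<phi> x)) ` S)"
  unfolding subspace_def
proof (intro conjI ballI allI)
  have "\<phi> 0 = 0" using scale[OF subspace_0[OF S], of 0] by simp
  then show "0 \<in> (\<lambda>x. (x, \<phi> x)) ` S"
    using subspace_0[OF S] by (intro image_eqI[of _ _ 0]) (simp_all add: zero_prod_def)
next
  fix p q assume "p \<in> (\<lambda>x. (x, \<phi> x)) ` S" "q \<in> (\<lambda>x. (x, \<phi> x)) ` S"
  then obtain x y where "x \<in> S" "y \<in> S" "p = (x, \<phi> x)" "q = (y, \<phi> y)" by blast
  then show "p + q \<in> (\<lambda>x. (x, \<phi> x)) ` S"
    using subspace_add[OF S] add by (intro image_eqI[of _ _ "x + y"]) simp_all
next
  fix c p assume "p \<in> (\<lambda>x. (x, \<phi> x)) ` S"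
  then obtain x where "x \<in> S" "p = (x, \<phi> x)" by blast
  then show "c *\<^sub>R p \<in> (\<lambda>x. (x, \<phi> x)) ` S"
    using subspace_scale[OF S] scale by (intro image_eqI[of _ _ "c *\<^sub>R x"]) simp_all
qed

theorem Hahn_Banach_norm_dominated:
  fixes \<phi> :: "'a::real_normed_vector \<Rightarrow> real"
  assumes "subspace S"
    and "\<And>x y. x \<in> S \<Longrightarrow> y \<in> S \<Longrightarrow> \<phi> (x + y) = \<phi> x + \<phi> y"
    and "\<And>c x. x \<in> S \<Longrightarrow> \<phi> (c *\<^sub>R x) = c * \<phi> x"
    and dominated: "\<And>x. x \<in> S \<Longrightarrow> \<phi> x \<le> norm x"
  shows "\<exists>\<psi>\<in>dual_ball. \<forall>x\<in>S. \<psi> x = \<phi> x"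
proof -
  have "norm_dominated_graph ((\<lambda>x. (x, \<phi> x)) ` S)"
    unfolding norm_dominated_graph_def using subspace_graph[OF assms(1-3)] dominated by blast
  then show ?thesis
  proof (rule norm_dominated_graph_Zorn)
    fix M assume M: "norm_dominated_graph M" "(\<lambda>x. (x, \<phi> x)) ` S \<subseteq> M"
      and max: "\<And>G. norm_dominated_graph G \<Longrightarrow> M \<subseteq> G \<Longrightarrow> G = M"
    obtain \<psi> where "\<psi> \<in> dual_ball" and "\<And>x a. (x, a) \<in> M \<Longrightarrow> \<psi> x = a"
      using maximal_norm_dominated_graph_functional[OF M(1) max] by blast
    with M(2) show ?thesis by blast
  qed
qed

lemma sum_PiE_lessThan_Suc:
  "(\<Sum>f\<in>{..<Suc k} \<rightarrow>\<^sub>E I. F f) = (\<Sum>x\<in>I. \<Sum>f\<in>{..<k} \<rightarrow>\<^sub>E I. F (f(k := x)))"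
  by (simp add: lessThan_Suc sum_PiE_insert)

definition multilinear_map :: "nat \<Rightarrow> ((nat \<Rightarrow> 'a::real_vector) \<Rightarrow> 'b::real_vector) \<Rightarrow> bool" where
  "multilinear_map k A \<longleftrightarrow>
     (\<forall>v w. (\<forall>i<k. v i = w i) \<longrightarrow> A v = A w) \<and> (\<forall>i<k. \<forall>v. linear (\<lambda>y. A (v(i := y))))"

lemma cont_multilinear_imp_multilinear_map: "cont_multilinear k A \<Longrightarrow> multilinear_map k A"
  unfolding cont_multilinear_def multilinear_map_def by blast

lemma multilinear_map_cong: "multilinear_map k A \<Longrightarrow> (\<And>i. i < k \<Longrightarrow> v i = w i) \<Longrightarrow> A v = A w"
  unfolding multilinear_map_def by blast

lemma multilinear_map_linear: "multilinear_map k A \<Longrightarrow> i < k \<Longrightarrow> linear (\<lambda>y. A (v(i := y)))"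
  unfolding multilinear_map_def by blast

lemma multilinear_map_fix_last:
  assumes "multilinear_map (Suc k) A"
  shows "multilinear_map k (\<lambda>v. A (v(k := z)))"
  unfolding multilinear_map_def
proof (intro conjI allI impI)
  fix v w :: "nat \<Rightarrow> 'a" assume "\<forall>i<k. v i = w i"
  then show "A (v(k := z)) = A (w(k := z))"
    by (intro multilinear_map_cong[OF assms]) auto
next
  fix i v assume "i < k"
  then have "(v(i := y))(k := z) = (v(k := z))(i := y)" for y
    by (auto simp: fun_eq_iff)
  moreover have "linear (\<lambda>y. A ((v(k := z))(i := y)))"
    using \<open>i < k\<close> by (intro multilinear_map_linear[OF assms]) simp
  ultimately show "linear (\<lambda>y. A ((v(i := y))(k := z)))"
    by simp
qed

lemma multilinear_map_sum:
  assumes "multilinear_map k A"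
  shows "A (\<lambda>l. \<Sum>i\<in>I. h l i) = (\<Sum>f\<in>{..<k} \<rightarrow>\<^sub>E I. A (\<lambda>l. h l (f l)))"
  using assms
proof (induction k arbitrary: A)
  case 0
  have "A (\<lambda>l. \<Sum>i\<in>I. h l i) = A (\<lambda>l. h l undefined)"
    by (rule multilinear_map_cong[OF 0]) simp
  then show ?case by simp
next
  case (Suc k)
  let ?v = "\<lambda>l. \<Sum>i\<in>I. h l i"
  have "A ?v = A (?v(k := \<Sum>i\<in>I. h k i))"
    by (rule arg_cong[where f = A]) (simp add: fun_eq_iff)
  also have "\<dots> = (\<Sum>i\<in>I. A (?v(k := h k i)))"
    by (rule linear_sum[OF multilinear_map_linear[OF Suc.prems lessI]])
  also have "\<dots> = (\<Sum>i\<in>I. \<Sum>f\<in>{..<k} \<rightarrow>\<^sub>E I. A ((\<lambda>l. h l (f l))(k := h k i)))"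
    by (rule sum.cong[OF refl]) (rule Suc.IH[OF multilinear_map_fix_last[OF Suc.prems]])
  also have "\<dots> = (\<Sum>f\<in>{..<Suc k} \<rightarrow>\<^sub>E I. A (\<lambda>l. h l (f l)))"
    unfolding sum_PiE_lessThan_Suc
    by (intro sum.cong refl arg_cong[where f = A]) (auto simp: fun_eq_iff)
  finally show ?case .
qed

lemma multilinear_map_scale:
  assumes "multilinear_map k A"
  shows "A (\<lambda>l. c l *\<^sub>R v l) = (\<Prod>l<k. c l) *\<^sub>R A v"
  using assms
proof (induction k arbitrary: A)
  case 0
  have "A (\<lambda>l. c l *\<^sub>R v l) = A v"
    by (rule multilinear_map_cong[OF 0]) simp
  then show ?case by simp
next
  case (Suc k)
  let ?w = "\<lambda>l. c l *\<^sub>R v l"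
  have "A ?w = A (?w(k := c k *\<^sub>R v k))"
    by (rule arg_cong[where f = A]) (simp add: fun_eq_iff)
  also have "\<dots> = c k *\<^sub>R A (?w(k := v k))"
    by (rule linear_scale[OF multilinear_map_linear[OF Suc.prems lessI]])
  also have "A (?w(k := v k)) = (\<Prod>l<k. c l) *\<^sub>R A (v(k := v k))"
    by (rule Suc.IH[OF multilinear_map_fix_last[OF Suc.prems]])
  finally show ?case by (simp add: mult.commute)
qed

text \<open>The polarization formula recovers from a \<open>k\<close>-homogeneous polynomial \<open>P(x) = A(x, \<dots>, x)\<close> the
  symmetrization of \<open>A\<close>, with norm controlled by the values of \<open>P\<close> alone.\<close>

definition polarization :: "nat \<Rightarrow> ('a::real_vector \<Rightarrow> 'b::real_vector) \<Rightarrow> (nat \<Rightarrow> 'a) \<Rightarrow> 'b" where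
  "polarization k P v = (1 / (2 ^ k * fact k)) *\<^sub>R
     (\<Sum>\<epsilon>\<in>signs {..<k}. (\<Prod>l<k. \<epsilon> l) *\<^sub>R P (\<Sum>l<k. \<epsilon> l *\<^sub>R v l))"

lemma sum_signs_prod_prod_comp:
  assumes f: "f \<in> {..<k} \<rightarrow>\<^sub>E {..<k}"
  shows "(\<Sum>\<epsilon>\<in>signs {..<k}. (\<Prod>l<k. \<epsilon> l) * (\<Prod>m<k. \<epsilon> (f m)))
         = (if bij_betw f {..<k} {..<k} then 2 ^ k else 0)"
proof (cases "bij_betw f {..<k} {..<k}")
  case True
  have "(\<Prod>l<k. \<epsilon> l) * (\<Prod>m<k. \<epsilon> (f m)) = 1" if "\<epsilon> \<in> signs {..<k}" for \<epsilon>
  proof -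
    have "(\<Prod>l<k. \<epsilon> l) * (\<Prod>m<k. \<epsilon> (f m)) = (\<Prod>l<k. \<epsilon> l * \<epsilon> l)"
      by (simp add: prod.reindex_bij_betw[OF True] prod.distrib)
    also have "\<dots> = 1" using signs_mult_self[OF that] by simp
    finally show ?thesis .
  qed
  then show ?thesis using True by (simp add: card_signs)
next
  case False
  have "f ` {..<k} \<noteq> {..<k}"
  proof
    assume "f ` {..<k} = {..<k}"
    then have "bij_betw f {..<k} {..<k}"
      unfolding bij_betw_def by (simp add: finite_surj_inj)
    with False show False ..
  qed
  then obtain l0 where l0: "l0 < k" "l0 \<notin> f ` {..<k}"
    using f by auto
  have "sign_avg {..<k} (\<lambda>\<epsilon>. (\<Prod>l<k. \<epsilon> l) * (\<Prod>m<k. \<epsilon> (f m))) = 0"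
  proof (rule sign_avg_odd[of l0])
    fix \<epsilon> :: "nat \<Rightarrow> real"
    have "(\<Prod>l<k. (\<epsilon>(l0 := - \<epsilon> l0)) l) = - (\<Prod>l<k. \<epsilon> l)"
      using l0(1) by (simp add: prod.remove[of "{..<k}" l0] prod.cong[of _ _ "\<epsilon>(l0 := - \<epsilon> l0)" \<epsilon>])
    moreover have "(\<Prod>m<k. (\<epsilon>(l0 := - \<epsilon> l0)) (f m)) = (\<Prod>m<k. \<epsilon> (f m))"
      using l0(2) by (intro prod.cong) auto
    ultimately show "(\<Prod>l<k. (\<epsilon>(l0 := - \<epsilon> l0)) l) * (\<Prod>m<k. (\<epsilon>(l0 := - \<epsilon> l0)) (f m))
        = - ((\<Prod>l<k. \<epsilon> l) * (\<Prod>m<k. \<epsilon> (f m)))"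
      by simp
  qed (use l0 in simp)
  then show ?thesis using False by (simp add: sign_avg_def)
qed

lemma sum_bij_PiE_eq_sum_permutes:
  assumes "multilinear_map k A"
  shows "(\<Sum>f\<in>{f \<in> {..<k} \<rightarrow>\<^sub>E {..<k}. bij_betw f {..<k} {..<k}}. A (\<lambda>m. v (f m)))
       = (\<Sum>p\<in>{p. p permutes {..<k}}. A (\<lambda>m. v (p m)))"
proof (rule sum.reindex_bij_witness[where i = "\<lambda>p. restrict p {..<k}" and j = "\<lambda>f. restrict_id f {..<k}"])
  fix f assume f: "f \<in> {f \<in> {..<k} \<rightarrow>\<^sub>E {..<k}. bij_betw f {..<k} {..<k}}"
  then show "restrict (restrict_id f {..<k}) {..<k} = f"
    by (auto simp: fun_eq_iff PiE_iff extensional_def)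
  show "restrict_id f {..<k} \<in> {p. p permutes {..<k}}"
    using f by (simp add: permutes_restrict_id)
  show "A (\<lambda>m. v (restrict_id f {..<k} m)) = A (\<lambda>m. v (f m))"
    by (rule multilinear_map_cong[OF assms]) simp
next
  fix p assume "p \<in> {p. p permutes {..<k}}"
  then have p: "p permutes {..<k}" by simp
  show "restrict_id (restrict p {..<k}) {..<k} = p"
    using permutes_not_in[OF p] by (auto simp: fun_eq_iff restrict_id_def)
  have "bij_betw (restrict p {..<k}) {..<k} {..<k}"
    using permutes_imp_bij[OF p] by (rule bij_betw_cong[THEN iffD1, rotated]) simp
  then show "restrict p {..<k} \<in> {f \<in> {..<k} \<rightarrow>\<^sub>E {..<k}. bij_betw f {..<k} {..<k}}"
    using permutes_in_image[OF p] by auto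
qed

lemma polarization_eq_symmetrization:
  assumes A: "multilinear_map k A" and P: "\<And>x. P x = A (\<lambda>_. x)"
  shows "polarization k P v = (1 / fact k) *\<^sub>R (\<Sum>p | p permutes {..<k}. A (\<lambda>m. v (p m)))"
proof -
  let ?F = "{..<k} \<rightarrow>\<^sub>E {..<k}"
  have "(\<Sum>\<epsilon>\<in>signs {..<k}. (\<Prod>l<k. \<epsilon> l) *\<^sub>R P (\<Sum>l<k. \<epsilon> l *\<^sub>R v l))
      = (\<Sum>\<epsilon>\<in>signs {..<k}. \<Sum>f\<in>?F. ((\<Prod>l<k. \<epsilon> l) * (\<Prod>m<k. \<epsilon> (f m))) *\<^sub>R A (\<lambda>m. v (f m)))"
    by (simp add: P multilinear_map_sum[OF A] multilinear_map_scale[OF A] scaleR_sum_right)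
  also have "\<dots> = (\<Sum>f\<in>?F. (\<Sum>\<epsilon>\<in>signs {..<k}. (\<Prod>l<k. \<epsilon> l) * (\<Prod>m<k. \<epsilon> (f m))) *\<^sub>R A (\<lambda>m. v (f m)))"
    by (simp add: sum.swap[of _ "signs {..<k}"] scaleR_sum_left)
  also have "\<dots> = (\<Sum>f\<in>?F. (if bij_betw f {..<k} {..<k} then 2 ^ k else 0) *\<^sub>R A (\<lambda>m. v (f m)))"
    by (intro sum.cong refl) (simp add: sum_signs_prod_prod_comp)
  also have "\<dots> = (\<Sum>f\<in>?F. if bij_betw f {..<k} {..<k} then 2 ^ k *\<^sub>R A (\<lambda>m. v (f m)) else 0)"
    by (intro sum.cong refl) simp
  also have "\<dots> = 2 ^ k *\<^sub>R (\<Sum>f\<in>{f \<in> ?F. bij_betw f {..<k} {..<k}}. A (\<lambda>m. v (f m)))"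
    unfolding scaleR_sum_right by (rule sum.inter_filter[symmetric]) (simp add: finite_PiE)
  finally show ?thesis
    unfolding polarization_def sum_bij_PiE_eq_sum_permutes[OF A] by simp
qed

lemma polarization_diagonal:
  assumes "multilinear_map k A" "\<And>x. P x = A (\<lambda>_. x)"
  shows "polarization k P (\<lambda>_. x) = P x"
proof -
  have "polarization k P (\<lambda>_. x) = (1 / fact k) *\<^sub>R (\<Sum>p | p permutes {..<k}. P x)"
    by (simp add: polarization_eq_symmetrization[OF assms(1)] assms(2))
  then show ?thesis
    by (simp add: sum_constant_scaleR card_permutations[of "{..<k}" k])
qed

lemma multilinear_map_polarization:
  assumes A: "multilinear_map k A" and P: "\<And>x. P x = A (\<lambda>_. x)"
  shows "multilinear_map k (polarization k P)"
  unfolding multilinear_map_def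
proof (intro conjI allI impI)
  fix v w :: "nat \<Rightarrow> 'a" assume "\<forall>i<k. v i = w i"
  then show "polarization k P v = polarization k P w"
    unfolding polarization_def by simp
next
  fix l v assume l: "l < k"
  have "linear (\<lambda>y. A (\<lambda>m. (v(l := y)) (p m)))" if p: "p permutes {..<k}" for p
  proof -
    obtain m0 where m0: "m0 < k" "p m0 = l"
      using l permutes_surj[OF p] by (metis lessThan_iff permutes_image[OF p] imageE)
    have "A (\<lambda>m. (v(l := y)) (p m)) = A ((\<lambda>m. v (p m))(m0 := y))" for y
      using m0 permutes_inj[OF p] by (intro multilinear_map_cong[OF A]) (auto dest: injD)
    then show ?thesis
      using multilinear_map_linear[OF A m0(1)] by simp
  qed
  then have "linear (\<lambda>y. \<Sum>p | p permutes {..<k}. A (\<lambda>m. (v(l := y)) (p m)))"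
    by (intro linear_compose_sum) simp
  from linear_compose[OF this linear_scale_self]
  have "linear (\<lambda>y. (1 / fact k) *\<^sub>R (\<Sum>p | p permutes {..<k}. A (\<lambda>m. (v(l := y)) (p m))))"
    by (simp add: o_def)
  moreover have "polarization k P w = (1 / fact k) *\<^sub>R (\<Sum>p | p permutes {..<k}. A (\<lambda>m. w (p m)))" for w
    by (rule polarization_eq_symmetrization[OF A]) (rule P)
  ultimately show "linear (\<lambda>y. polarization k P (v(l := y)))"
    by simp
qed

lemma power_div_fact_le_exp: "real k ^ k / fact k \<le> exp (real k)"
proof -
  have "real k ^ k / fact k = (\<Sum>n\<in>{k}. real k ^ n /\<^sub>R fact n)"
    by (simp add: divide_inverse mult.commute)
  also have "\<dots> \<le> (\<Sum>n. real k ^ n /\<^sub>R fact n)"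
    by (rule sum_le_suminf[OF summable_exp_generic]) auto
  finally show ?thesis by (simp add: exp_def)
qed

lemma norm_polarization_le:
  fixes P :: "'a::real_normed_vector \<Rightarrow> 'b::real_normed_vector"
  assumes P: "\<And>y. norm (P y) \<le> C * c ^ k * norm y ^ k" and "C \<ge> 0" "c \<ge> 0" "r \<ge> 0"
    and v: "\<And>l. l < k \<Longrightarrow> norm (v l) \<le> r"
  shows "norm (polarization k P v) \<le> C * (exp 1 * c * r) ^ k"
proof -
  have term_le: "norm ((\<Prod>l<k. \<epsilon> l) *\<^sub>R P (\<Sum>l<k. \<epsilon> l *\<^sub>R v l)) \<le> C * c ^ k * (real k * r) ^ k"
    if \<epsilon>: "\<epsilon> \<in> signs {..<k}" for \<epsilon>
  proof -
    have "norm (\<Sum>l<k. \<epsilon> l *\<^sub>R v l) \<le> (\<Sum>l<k. r)"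
      using v signs_abs[OF \<epsilon>] by (intro norm_sum[THEN order_trans] sum_mono) simp
    then have "norm (P (\<Sum>l<k. \<epsilon> l *\<^sub>R v l)) \<le> C * c ^ k * (real k * r) ^ k"
      using assms(2,3) by (intro P[THEN order_trans] mult_left_mono power_mono) auto
    moreover have "\<bar>\<Prod>l<k. \<epsilon> l\<bar> = 1"
      using signs_abs[OF \<epsilon>] by (simp add: abs_prod)
    ultimately show ?thesis by simp
  qed
  have "norm (polarization k P v)
      = (1 / (2 ^ k * fact k)) * norm (\<Sum>\<epsilon>\<in>signs {..<k}. (\<Prod>l<k. \<epsilon> l) *\<^sub>R P (\<Sum>l<k. \<epsilon> l *\<^sub>R v l))"
    unfolding polarization_def by simp
  also have "\<dots> \<le> (1 / (2 ^ k * fact k)) * (\<Sum>\<epsilon>\<in>signs {..<k}. C * c ^ k * (real k * r) ^ k)"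
    by (intro mult_left_mono order_trans[OF norm_sum sum_mono] term_le) auto
  also have "\<dots> = C * (c * r) ^ k * (real k ^ k / fact k)"
    by (simp add: card_signs power_mult_distrib field_simps)
  also have "\<dots> \<le> C * (c * r) ^ k * exp (real k)"
    using assms(2-4) power_div_fact_le_exp by (intro mult_left_mono) auto
  also have "\<dots> = C * (exp 1 * c * r) ^ k"
    by (simp add: power_mult_distrib exp_of_nat_mult[symmetric] mult_ac)
  finally show ?thesis .
qed

lemma sum_mult_le_sign_avg_abs:
  fixes t c :: "'i \<Rightarrow> nat \<Rightarrow> real"
  assumes J: "finite J" and w: "w \<ge> 0" and column: "\<And>i. i < n \<Longrightarrow> (\<Sum>j\<in>J. (t j i)\<^sup>2) \<le> w\<^sup>2"
  shows "(\<Sum>i<n. \<Sum>j\<in>J. t j i * c j i) \<le> w * sqrt 3 * sign_avg J (\<lambda>\<epsilon>. \<Sum>i<n. \<bar>\<Sum>j\<in>J. \<epsilon> j * c j i\<bar>)"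
proof -
  have "(\<Sum>j\<in>J. t j i * c j i) \<le> w * (sqrt 3 * sign_avg J (\<lambda>\<epsilon>. \<bar>\<Sum>j\<in>J. \<epsilon> j * c j i\<bar>))"
    if i: "i < n" for i
  proof -
    have "(\<Sum>j\<in>J. t j i * c j i) \<le> sqrt ((\<Sum>j\<in>J. (t j i)\<^sup>2) * (\<Sum>j\<in>J. (c j i)\<^sup>2))"
      by (rule real_le_rsqrt[OF Cauchy_Schwarz_ineq_sum])
    also have "\<dots> \<le> w * sqrt (\<Sum>j\<in>J. (c j i)\<^sup>2)"
      using column[OF i] w by (simp add: real_sqrt_mult real_le_lsqrt mult_right_mono sum_nonneg)
    also have "\<dots> \<le> w * (sqrt 3 * sign_avg J (\<lambda>\<epsilon>. \<bar>\<Sum>j\<in>J. \<epsilon> j * c j i\<bar>))"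
      by (rule mult_left_mono[OF khintchine_inequality[OF J] w])
    finally show ?thesis .
  qed
  then have "(\<Sum>i<n. \<Sum>j\<in>J. t j i * c j i) \<le> (\<Sum>i<n. w * (sqrt 3 * sign_avg J (\<lambda>\<epsilon>. \<bar>\<Sum>j\<in>J. \<epsilon> j * c j i\<bar>)))"
    by (intro sum_mono) simp
  then show ?thesis
    by (simp add: sign_avg_sum sum_distrib_left mult.assoc)
qed

definition sign_norm_avg :: "nat \<Rightarrow> 'i set \<Rightarrow> ('i \<Rightarrow> 'b::real_normed_vector) \<Rightarrow> real" where
  "sign_norm_avg k J a =
     (if k = 0 then norm (\<Sum>j\<in>J. a j) else sign_avg J (\<lambda>\<epsilon>. norm (\<Sum>j\<in>J. \<epsilon> j *\<^sub>R a j)))"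

text \<open>Averaging over signs more than once changes nothing, since the average is invariant under
  multiplication by a fixed sign vector.\<close>

lemma sign_avg_sign_norm_avg:
  assumes "finite J"
  shows "sign_avg J (\<lambda>\<epsilon>. sign_norm_avg k J (\<lambda>j. \<epsilon> j *\<^sub>R a j)) = sign_norm_avg (Suc k) J a"
proof (cases "k = 0")
  case False
  have "sign_norm_avg k J (\<lambda>j. \<epsilon> j *\<^sub>R a j) = sign_norm_avg (Suc k) J a" if "\<epsilon> \<in> signs J" for \<epsilon>
    using False sign_avg_mult_invariant[OF that, of "\<lambda>\<delta>. norm (\<Sum>j\<in>J. \<delta> j *\<^sub>R a j)"]
    unfolding sign_norm_avg_def by (simp add: mult.commute cong: sum.cong)
  then show ?thesis
    using assms by (simp add: sign_avg_cong[of J _ "\<lambda>_. sign_norm_avg (Suc k) J a"])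
qed (simp add: sign_norm_avg_def)

lemma multilinear_map_split_last:
  assumes "multilinear_map (Suc k) A"
  shows "A (v(k := \<Sum>i\<in>I. s i *\<^sub>R u i)) = (\<Sum>i\<in>I. s i *\<^sub>R A (v(k := u i)))"
proof -
  have lin: "linear (\<lambda>y. A (v(k := y)))"
    by (rule multilinear_map_linear[OF assms lessI])
  show ?thesis
    using linear_sum[OF lin, of "\<lambda>i. s i *\<^sub>R u i" I] by (simp add: o_def linear_scale[OF lin])
qed

text \<open>A multilinear version of Grothendieck's inequality for \<open>\<ell>\<^sub>\<infinity>\<^sup>n\<close> with Hilbert space values. The
  vectors \<open>u\<^sub>i\<close> play the role of the unit vector basis of \<open>\<ell>\<^sub>\<infinity>\<^sup>n\<close>, and each \<open>x\<^sub>j\<close> has coordinates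
  \<open>t\<^sub>j\<^sub>i\<close> whose columns have \<open>\<ell>\<^sub>2\<close>-norm at most \<open>w\<close>. The last variable is split along the coordinates,
  Khintchine's inequality turns the \<open>\<ell>\<^sub>2\<close>-norms of the columns into sign averages, and the choice of
  signs \<open>sgn\<close> is absorbed into a vector \<open>\<sigma>\<close> of the cube; the signs \<open>\<epsilon>\<^sub>j\<close> are moved into \<open>a\<close>, where
  they average out.\<close>

lemma multilinear_inner_sum_le:
  fixes A :: "(nat \<Rightarrow> 'a::real_normed_vector) \<Rightarrow> 'b::real_inner" and n :: nat
  assumes J: "finite J" and w: "w \<ge> 0"
    and A: "multilinear_map k A"
    and bound: "\<And>v. (\<And>l. l < k \<Longrightarrow> norm (v l) \<le> r) \<Longrightarrow> norm (A v) \<le> M"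
    and cube: "\<And>s. (\<And>i. i < n \<Longrightarrow> \<bar>s i\<bar> \<le> 1) \<Longrightarrow> norm (\<Sum>i<n. s i *\<^sub>R u i) \<le> r"
    and coords: "\<And>j. j \<in> J \<Longrightarrow> x j = (\<Sum>i<n. t j i *\<^sub>R u i)"
    and column: "\<And>i. i < n \<Longrightarrow> (\<Sum>j\<in>J. (t j i)\<^sup>2) \<le> w\<^sup>2"
  shows "(\<Sum>j\<in>J. inner (A (\<lambda>_. x j)) (a j)) \<le> sqrt 3 ^ k * M * w ^ k * sign_norm_avg k J a"
  using A bound
proof (induction k arbitrary: A a)
  case 0
  have "A (\<lambda>_. x j) = A (\<lambda>_. 0)" for j
    by (rule multilinear_map_cong[OF "0.prems"(1)]) simp
  then have "(\<Sum>j\<in>J. inner (A (\<lambda>_. x j)) (a j)) = inner (A (\<lambda>_. 0)) (\<Sum>j\<in>J. a j)"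
    by (simp add: inner_sum_right)
  also have "\<dots> \<le> norm (A (\<lambda>_. 0)) * norm (\<Sum>j\<in>J. a j)"
    by (rule norm_cauchy_schwarz)
  also have "\<dots> \<le> M * norm (\<Sum>j\<in>J. a j)"
    using "0.prems"(2)[of "\<lambda>_. 0"] by (intro mult_right_mono) auto
  finally show ?case by (simp add: sign_norm_avg_def)
next
  case (Suc k)
  let ?X = "\<lambda>j. \<lambda>_::nat. x j"
  define c where "c j i = inner (A ((?X j)(k := u i))) (a j)" for j i
  have "(\<Sum>j\<in>J. inner (A (?X j)) (a j)) = (\<Sum>j\<in>J. \<Sum>i<n. t j i * c j i)"
  proof (rule sum.cong[OF refl])
    fix j assume j: "j \<in> J"
    have "A (?X j) = A ((?X j)(k := \<Sum>i<n. t j i *\<^sub>R u i))"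
      using coords[OF j] by (intro arg_cong[where f = A]) (auto simp: fun_eq_iff)
    also have "\<dots> = (\<Sum>i<n. t j i *\<^sub>R A ((?X j)(k := u i)))"
      by (rule multilinear_map_split_last[OF Suc.prems(1)])
    finally show "inner (A (?X j)) (a j) = (\<Sum>i<n. t j i * c j i)"
      by (simp add: c_def inner_sum_left)
  qed
  also have "\<dots> = (\<Sum>i<n. \<Sum>j\<in>J. t j i * c j i)"
    by (rule sum.swap)
  also have "\<dots> \<le> w * sqrt 3 * sign_avg J (\<lambda>\<epsilon>. \<Sum>i<n. \<bar>\<Sum>j\<in>J. \<epsilon> j * c j i\<bar>)"
    by (rule sum_mult_le_sign_avg_abs[OF J w column])
  also have "\<dots> \<le> w * sqrt 3 * sign_avg J (\<lambda>\<epsilon>. sqrt 3 ^ k * M * w ^ k * sign_norm_avg k J (\<lambda>j. \<epsilon> j *\<^sub>R a j))"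
  proof (intro mult_left_mono sign_avg_mono)
    fix \<epsilon> :: "'c \<Rightarrow> real"
    define \<sigma> where "\<sigma> = (\<Sum>i<n. sgn (\<Sum>j\<in>J. \<epsilon> j * c j i) *\<^sub>R u i)"
    have "(\<Sum>i<n. \<bar>\<Sum>j\<in>J. \<epsilon> j * c j i\<bar>)
        = (\<Sum>i<n. \<Sum>j\<in>J. \<epsilon> j * c j i * sgn (\<Sum>j\<in>J. \<epsilon> j * c j i))"
      by (simp add: abs_sgn sum_distrib_right)
    also have "\<dots> = (\<Sum>j\<in>J. inner (A ((?X j)(k := \<sigma>))) (\<epsilon> j *\<^sub>R a j))"
      unfolding \<sigma>_def multilinear_map_split_last[OF Suc.prems(1)]
      by (simp add: c_def inner_sum_left sum.swap[of _ J] sum_distrib_left mult_ac)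
    also have "\<dots> \<le> sqrt 3 ^ k * M * w ^ k * sign_norm_avg k J (\<lambda>j. \<epsilon> j *\<^sub>R a j)"
    proof (rule Suc.IH)
      show "multilinear_map k (\<lambda>v. A (v(k := \<sigma>)))"
        by (rule multilinear_map_fix_last[OF Suc.prems(1)])
      have "norm \<sigma> \<le> r"
        unfolding \<sigma>_def by (rule cube) (simp add: abs_sgn_eq)
      then show "norm (A (v(k := \<sigma>))) \<le> M" if "\<And>l. l < k \<Longrightarrow> norm (v l) \<le> r" for v
        using that by (intro Suc.prems(2)) (auto simp: less_Suc_eq)
    qed
    finally show "(\<Sum>i<n. \<bar>\<Sum>j\<in>J. \<epsilon> j * c j i\<bar>) \<le> \<dots>" .
  qed (use w in simp)
  also have "\<dots> = sqrt 3 ^ Suc k * M * w ^ Suc k * sign_norm_avg (Suc k) J a"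
    using J by (simp add: sign_avg_cmult sign_avg_sign_norm_avg mult_ac)
  finally show ?case by simp
qed

lemma multilinear_inner_sum_le_Hilbert:
  fixes A :: "(nat \<Rightarrow> 'a::real_normed_vector) \<Rightarrow> 'b::real_inner" and n :: nat
  assumes "finite J" "w \<ge> 0" "k \<ge> 1" "M \<ge> 0"
    and "multilinear_map k A"
    and "\<And>v. (\<And>l. l < k \<Longrightarrow> norm (v l) \<le> r) \<Longrightarrow> norm (A v) \<le> M"
    and "\<And>s. (\<And>i. i < n \<Longrightarrow> \<bar>s i\<bar> \<le> 1) \<Longrightarrow> norm (\<Sum>i<n. s i *\<^sub>R u i) \<le> r"
    and "\<And>j. j \<in> J \<Longrightarrow> x j = (\<Sum>i<n. t j i *\<^sub>R u i)"
    and "\<And>i. i < n \<Longrightarrow> (\<Sum>j\<in>J. (t j i)\<^sup>2) \<le> w\<^sup>2"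
  shows "(\<Sum>j\<in>J. inner (A (\<lambda>_. x j)) (a j)) \<le> sqrt 3 ^ k * M * w ^ k * sqrt (\<Sum>j\<in>J. (norm (a j))\<^sup>2)"
proof -
  have "(\<Sum>j\<in>J. inner (A (\<lambda>_. x j)) (a j)) \<le> sqrt 3 ^ k * M * w ^ k * sign_norm_avg k J a"
    by (rule multilinear_inner_sum_le[OF assms(1,2,5-9)])
  also have "\<dots> \<le> sqrt 3 ^ k * M * w ^ k * sqrt (\<Sum>j\<in>J. (norm (a j))\<^sup>2)"
    using assms(1-4) sign_avg_norm_sum_le[OF assms(1)] unfolding sign_norm_avg_def
    by (intro mult_left_mono) auto
  finally show ?thesis .
qed

lemma dual_ball_abs_le:
  assumes "\<phi> \<in> dual_ball"
  shows "\<bar>\<phi> x\<bar> \<le> norm x"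
proof -
  have "bounded_linear \<phi>" "onorm \<phi> \<le> 1"
    using assms unfolding dual_ball_def by auto
  then have "norm (\<phi> x) \<le> 1 * norm x"
    using onorm[of \<phi> x] by (meson mult_right_mono norm_ge_zero order_trans)
  then show ?thesis by simp
qed

lemma weak2_norm_ge:
  assumes "\<phi> \<in> dual_ball"
  shows "sqrt (\<Sum>j\<in>{1..m}. \<bar>\<phi> (x j)\<bar>^2) \<le> weak2_norm m x"
  unfolding weak2_norm_def
proof (rule cSup_upper)
  show "bdd_above ((\<lambda>\<phi>. sqrt (\<Sum>j\<in>{1..m}. \<bar>\<phi> (x j)\<bar>^2)) ` dual_ball)"
    by (rule bdd_aboveI2[where M = "sqrt (\<Sum>j\<in>{1..m}. (norm (x j))^2)"])
       (intro real_sqrt_le_mono sum_mono power_mono dual_ball_abs_le; simp)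
qed (use assms in blast)

lemma zero_in_dual_ball: "(\<lambda>_. 0) \<in> dual_ball"
  unfolding dual_ball_def by (simp add: onorm_zero)

lemma weak2_norm_nonneg: "0 \<le> weak2_norm m x"
  using weak2_norm_ge[OF zero_in_dual_ball, of m x] by simp

lemma coordinatewise_linear_sum:
  fixes T :: "'a::real_vector \<Rightarrow> 'i \<Rightarrow> real"
  assumes "\<And>x y. T (x + y) = (\<lambda>i. T x i + T y i)" and "\<And>c x. T (c *\<^sub>R x) = (\<lambda>i. c * T x i)"
    and "finite I"
  shows "T (\<Sum>k\<in>I. s k *\<^sub>R u k) = (\<lambda>i. \<Sum>k\<in>I. s k * T (u k) i)"
  using assms(3) by (induction I rule: finite_induct) (simp_all add: assms(1,2) assms(2)[of 0 0, simplified])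

lemma close_to_linf_basis:
  fixes N :: "'a::real_normed_vector set"
  assumes "close_to_linf lam N" "subspace N" "lam \<ge> 0"
  obtains n u t where
    "\<And>s. (\<And>i. i < (n::nat) \<Longrightarrow> \<bar>s i\<bar> \<le> 1) \<Longrightarrow> norm (\<Sum>i<n. s i *\<^sub>R u i) \<le> lam"
    "\<And>x. x \<in> N \<Longrightarrow> x = (\<Sum>i<n. t x i *\<^sub>R u i)"
    "\<And>i. i < n \<Longrightarrow> \<exists>\<phi>\<in>dual_ball. \<forall>x\<in>N. \<phi> x = t x i"
proof -
  obtain n T where T_add: "\<And>x y. T (x + y) = (\<lambda>i. T x i + T y i)"
    and T_scale: "\<And>c x. T (c *\<^sub>R x) = (\<lambda>i. c * T x i)"
    and bij: "bij_betw T N {y. \<forall>i\<ge>n. y i = 0}"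
    and T_norm: "\<And>x. x \<in> N \<Longrightarrow> linf_norm n (T x) \<le> norm x \<and> norm x \<le> lam * linf_norm n (T x)"
    using assms(1) unfolding close_to_linf_def by blast
  define u where "u i = inv_into N T (\<lambda>i'. if i' = i then 1 else 0)" for i
  have u: "u i \<in> N" "T (u i) = (\<lambda>i'. if i' = i then 1 else 0)" if "i < n" for i
    using bij that unfolding u_def bij_betw_def by (auto intro: inv_into_into f_inv_into_f)
  have T_sum: "T (\<Sum>i<n. s i *\<^sub>R u i) = (\<lambda>i'. if i' < n then s i' else 0)" for s :: "nat \<Rightarrow> real"
    using u(2) by (simp add: coordinatewise_linear_sum[OF T_add T_scale] fun_eq_iff
        if_distrib[of "\<lambda>x. _ * x"] cong: if_cong)
  have sum_in_N: "(\<Sum>i<n. s i *\<^sub>R u i) \<in> N" for s :: "nat \<Rightarrow> real"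
    using u(1) by (intro subspace_sum[OF assms(2)] subspace_scale[OF assms(2)]) auto
  show ?thesis
  proof (rule that[of n u T])
    fix s :: "nat \<Rightarrow> real" assume s: "\<And>i. i < n \<Longrightarrow> \<bar>s i\<bar> \<le> 1"
    have "linf_norm n (T (\<Sum>i<n. s i *\<^sub>R u i)) \<le> 1"
      unfolding linf_norm_def T_sum using s by (subst Max_le_iff) auto
    then show "norm (\<Sum>i<n. s i *\<^sub>R u i) \<le> lam"
      using T_norm[OF sum_in_N] assms(3) by (meson mult_left_le order_trans)
  next
    fix x assume x: "x \<in> N"
    have "T x \<in> {y. \<forall>i\<ge>n. y i = 0}"
      using bij x by (auto simp: bij_betw_def)
    then have "T x = T (\<Sum>i<n. T x i *\<^sub>R u i)"
      unfolding T_sum by (auto simp: fun_eq_iff not_less)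
    then show "x = (\<Sum>i<n. T x i *\<^sub>R u i)"
      using bij x sum_in_N unfolding bij_betw_def by (auto dest: inj_onD)
  next
    fix i assume i: "i < n"
    have "T x i \<le> norm x" if "x \<in> N" for x
    proof -
      have "T x i \<le> linf_norm n (T x)"
        unfolding linf_norm_def using i by (intro order_trans[OF abs_ge_self Max_ge]) auto
      then show ?thesis using T_norm[OF that] by linarith
    qed
    then show "\<exists>\<phi>\<in>dual_ball. \<forall>x\<in>N. \<phi> x = T x i"
      using assms(2) by (intro Hahn_Banach_norm_dominated) (simp_all add: T_add T_scale)
  qed
qed

lemma sum_squares_le_weak2_norm:
  assumes "\<phi> \<in> dual_ball" and "\<And>j. j \<in> {1..m} \<Longrightarrow> \<phi> (x j) = c j"
  shows "(\<Sum>j\<in>{1..m}. (c j)\<^sup>2) \<le> (weak2_norm m x)\<^sup>2"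
proof -
  have "(\<Sum>j\<in>{1..m}. (c j)\<^sup>2) = (\<Sum>j\<in>{1..m}. \<bar>\<phi> (x j)\<bar>^2)"
    using assms(2) by (intro sum.cong) auto
  also have "\<dots> = (sqrt (\<Sum>j\<in>{1..m}. \<bar>\<phi> (x j)\<bar>^2))\<^sup>2"
    by (rule real_sqrt_pow2[symmetric]) (intro sum_nonneg zero_le_power2)
  also have "\<dots> \<le> (weak2_norm m x)\<^sup>2"
    by (intro power_mono weak2_norm_ge[OF assms(1)] real_sqrt_ge_zero sum_nonneg) simp
  finally show ?thesis .
qed

lemma close_to_linf_weak2_coordinates:
  fixes x :: "nat \<Rightarrow> 'a::real_normed_vector"
  assumes "close_to_linf lam N" "subspace N" "lam \<ge> 0" and x: "\<And>j. j \<in> {1..m} \<Longrightarrow> x j \<in> N"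
  obtains n u t where
    "\<And>s. (\<And>i. i < (n::nat) \<Longrightarrow> \<bar>s i\<bar> \<le> 1) \<Longrightarrow> norm (\<Sum>i<n. s i *\<^sub>R u i) \<le> lam"
    "\<And>j. j \<in> {1..m} \<Longrightarrow> x j = (\<Sum>i<n. t j i *\<^sub>R u i)"
    "\<And>i. i < n \<Longrightarrow> (\<Sum>j\<in>{1..m}. (t j i)\<^sup>2) \<le> (weak2_norm m x)\<^sup>2"
proof (rule close_to_linf_basis[OF assms(1-3)])
  fix n u T
  assume cube: "\<And>s. (\<And>i. i < (n::nat) \<Longrightarrow> \<bar>s i\<bar> \<le> 1) \<Longrightarrow> norm (\<Sum>i<n. s i *\<^sub>R u i) \<le> lam"
    and coords: "\<And>y. y \<in> N \<Longrightarrow> y = (\<Sum>i<n. T y i *\<^sub>R u i)"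
    and functionals: "\<And>i. i < n \<Longrightarrow> \<exists>\<phi>\<in>dual_ball. \<forall>y\<in>N. \<phi> y = T y i"
  have "(\<Sum>j\<in>{1..m}. (T (x j) i)\<^sup>2) \<le> (weak2_norm m x)\<^sup>2" if i: "i < n" for i
  proof -
    obtain \<phi> where \<phi>: "\<phi> \<in> dual_ball" "\<And>y. y \<in> N \<Longrightarrow> \<phi> y = T y i"
      using functionals[OF i] by blast
    show ?thesis
      by (rule sum_squares_le_weak2_norm[OF \<phi>(1)]) (use \<phi>(2) x in auto)
  qed
  with cube coords x show ?thesis
    by (intro that[of n u "\<lambda>j. T (x j)"]) auto
qed

lemma norm_sum_le_of_cube:
  fixes n :: nat
  assumes cube: "\<And>s. (\<And>i. i < n \<Longrightarrow> \<bar>s i\<bar> \<le> 1) \<Longrightarrow> norm (\<Sum>i<n. s i *\<^sub>R u i) \<le> r"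
    and t: "\<And>i. i < n \<Longrightarrow> \<bar>t i\<bar> \<le> b" and "b \<ge> 0"
  shows "norm (\<Sum>i<n. t i *\<^sub>R u i) \<le> r * b"
proof (cases "b = 0")
  case True
  then have "(\<Sum>i<n. t i *\<^sub>R u i) = (\<Sum>i<n. 0 *\<^sub>R u i)"
    using t by (intro sum.cong) auto
  moreover have "0 \<le> r"
    using cube[of "\<lambda>_. 0"] by simp
  ultimately show ?thesis using True by simp
next
  case False
  then have b: "b > 0" using \<open>b \<ge> 0\<close> by simp
  have "norm (\<Sum>i<n. (t i / b) *\<^sub>R u i) \<le> r"
    using t b by (intro cube) (simp add: abs_divide)
  moreover have "(\<Sum>i<n. t i *\<^sub>R u i) = b *\<^sub>R (\<Sum>i<n. (t i / b) *\<^sub>R u i)"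
    using b by (simp add: scaleR_sum_right)
  ultimately show ?thesis
    using b by (simp add: mult.commute mult_left_mono)
qed

lemma homogeneous_polynomial_inner_sum_le:
  fixes P :: "'a::real_normed_vector \<Rightarrow> 'b::real_inner" and n :: nat
  assumes P: "cont_hom_poly k P" and k: "k \<ge> 1"
    and P_bound: "\<And>y. norm (P y) \<le> C * c ^ k * norm y ^ k" and C: "C \<ge> 0" and c: "c \<ge> 0"
    and J: "finite J" and w: "w \<ge> 0"
    and cube: "\<And>s. (\<And>i. i < n \<Longrightarrow> \<bar>s i\<bar> \<le> 1) \<Longrightarrow> norm (\<Sum>i<n. s i *\<^sub>R u i) \<le> r"
    and coords: "\<And>j. j \<in> J \<Longrightarrow> x j = (\<Sum>i<n. t j i *\<^sub>R u i)"
    and column: "\<And>i. i < n \<Longrightarrow> (\<Sum>j\<in>J. (t j i)\<^sup>2) \<le> w\<^sup>2"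
  shows "(\<Sum>j\<in>J. inner (P (x j)) (a j))
    \<le> C * (sqrt 3 * exp 1 * c * r * w) ^ k * sqrt (\<Sum>j\<in>J. (norm (a j))\<^sup>2)"
proof -
  obtain A where A: "multilinear_map k A" and PA: "\<And>x. P x = A (\<lambda>_. x)"
    using P cont_multilinear_imp_multilinear_map unfolding cont_hom_poly_def by blast
  have r: "r \<ge> 0"
    using cube[of "\<lambda>_. 0"] by simp
  let ?Q = "polarization k P"
  have diagonal: "?Q (\<lambda>_. y) = P y" for y
    by (rule polarization_diagonal[OF A]) (rule PA)
  have "(\<Sum>j\<in>J. inner (P (x j)) (a j)) = (\<Sum>j\<in>J. inner (?Q (\<lambda>_. x j)) (a j))"
    by (simp add: diagonal)
  also have "\<dots> \<le> sqrt 3 ^ k * (C * (exp 1 * c * r) ^ k) * w ^ k * sqrt (\<Sum>j\<in>J. (norm (a j))\<^sup>2)"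
  proof (rule multilinear_inner_sum_le_Hilbert[OF J w k _ _ _ cube coords column])
    show "0 \<le> C * (exp 1 * c * r) ^ k"
      using C c r by simp
    show "multilinear_map k ?Q"
      by (rule multilinear_map_polarization[OF A]) (rule PA)
    show "norm (?Q v) \<le> C * (exp 1 * c * r) ^ k" if "\<And>l. l < k \<Longrightarrow> norm (v l) \<le> r" for v
      by (rule norm_polarization_le[OF P_bound C c r that])
  qed
  also have "\<dots> = C * (sqrt 3 * exp 1 * c * r * w) ^ k * sqrt (\<Sum>j\<in>J. (norm (a j))\<^sup>2)"
    by (simp add: power_mult_distrib mult_ac)
  finally show ?thesis .
qed

lemma l2_norm_le_of_sums:
  fixes y :: "nat \<Rightarrow> 'i \<Rightarrow> 'b::real_inner"
  assumes J: "finite J" and sums: "\<And>j. j \<in> J \<Longrightarrow> (\<lambda>k. y k j) sums g j"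
    and bound: "\<And>k. (\<Sum>j\<in>J. inner (y k j) (g j)) \<le> C * q ^ Suc k * sqrt (\<Sum>j\<in>J. (norm (g j))\<^sup>2)"
    and C: "C \<ge> 0" and q: "0 \<le> q" "q \<le> 1 / 2"
  shows "sqrt (\<Sum>j\<in>J. (norm (g j))\<^sup>2) \<le> 2 * C * q"
proof -
  define S where "S = sqrt (\<Sum>j\<in>J. (norm (g j))\<^sup>2)"
  have S: "S \<ge> 0"
    unfolding S_def by (intro real_sqrt_ge_zero sum_nonneg) simp
  have "(\<lambda>k. \<Sum>j\<in>J. inner (y k j) (g j)) sums (\<Sum>j\<in>J. inner (g j) (g j))"
    by (intro sums_sum bounded_linear.sums[OF bounded_linear_inner_left sums])
  moreover have "(\<lambda>k. C * S * q * q ^ k) sums (C * S * q * (1 / (1 - q)))"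
    using q by (intro sums_mult geometric_sums) simp
  ultimately have "(\<Sum>j\<in>J. inner (g j) (g j)) \<le> C * S * q * (1 / (1 - q))"
    by (rule sums_le[rotated]) (use bound in \<open>simp add: S_def mult_ac\<close>)
  also have "\<dots> \<le> C * S * q * 2"
    using C S q by (intro mult_left_mono) (auto simp: field_simps)
  finally have "S * S \<le> (2 * C * q) * S"
    using J unfolding S_def by (simp add: sum_nonneg power2_norm_eq_inner[symmetric] mult_ac)
  then show ?thesis
    using S C q unfolding S_def[symmetric] by (cases "S = 0") (auto simp: mult_le_cancel_right)
qed

lemma analytic_at_pt_normalized:
  assumes "analytic_at_pt f a"
  obtains P C c \<delta> where "\<delta> > 0" "C \<ge> 0" "c > 0"
    and "\<And>k. k \<ge> 1 \<Longrightarrow> cont_hom_poly k (P k)"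
    and "\<And>k x. k \<ge> 1 \<Longrightarrow> norm (P k x) \<le> C * c ^ k * norm x ^ k"
    and "\<And>x. norm x < \<delta> \<Longrightarrow> (\<lambda>k. P (Suc k) x) sums (f (a + x) - f a)"
proof -
  obtain P C c \<delta> where "\<delta> > 0" "\<And>k. k \<ge> 1 \<Longrightarrow> cont_hom_poly k (P k)"
    and P_bound: "\<And>k x. k \<ge> 1 \<Longrightarrow> norm (P k x) \<le> C * c ^ k * norm x ^ k"
    and "\<And>x. norm x < \<delta> \<Longrightarrow> (\<lambda>k. P (Suc k) x) sums (f (a + x) - f a)"
    using assms unfolding analytic_at_pt_def by blast
  moreover have "norm (P k x) \<le> \<bar>C\<bar> * (\<bar>c\<bar> + 1) ^ k * norm x ^ k" if "k \<ge> 1" for k x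
  proof -
    have "C * c ^ k * norm x ^ k \<le> \<bar>C\<bar> * \<bar>c\<bar> ^ k * norm x ^ k"
      using abs_ge_self[of "C * c ^ k * norm x ^ k"] by (simp add: abs_mult power_abs)
    also have "\<dots> \<le> \<bar>C\<bar> * (\<bar>c\<bar> + 1) ^ k * norm x ^ k"
      by (intro mult_right_mono mult_left_mono power_mono) auto
    finally show ?thesis using P_bound[OF that, of x] by linarith
  qed
  ultimately show ?thesis
    by (intro that[of \<delta> "\<bar>C\<bar>" "\<bar>c\<bar> + 1" P]) auto
qed

lemma analytic_series_l2_le:
  fixes P :: "nat \<Rightarrow> 'a::real_normed_vector \<Rightarrow> 'b::real_inner" and n :: nat
  assumes P: "\<And>k. k \<ge> 1 \<Longrightarrow> cont_hom_poly k (P k)"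
    and P_bound: "\<And>k y. k \<ge> 1 \<Longrightarrow> norm (P k y) \<le> C * c ^ k * norm y ^ k"
    and P_sums: "\<And>y. norm y < \<delta> \<Longrightarrow> (\<lambda>k. P (Suc k) y) sums (f (a + y) - f a)"
    and C: "C \<ge> 0" and c: "c \<ge> 0" and J: "finite J" and w: "w \<ge> 0"
    and cube: "\<And>s. (\<And>i. i < n \<Longrightarrow> \<bar>s i\<bar> \<le> 1) \<Longrightarrow> norm (\<Sum>i<n. s i *\<^sub>R u i) \<le> r"
    and coords: "\<And>j. j \<in> J \<Longrightarrow> x j = (\<Sum>i<n. t j i *\<^sub>R u i)"
    and column: "\<And>i. i < n \<Longrightarrow> (\<Sum>j\<in>J. (t j i)\<^sup>2) \<le> w\<^sup>2"
    and small: "r * w < \<delta>" "sqrt 3 * exp 1 * c * r * w \<le> 1 / 2"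
  shows "sqrt (\<Sum>j\<in>J. (norm (f (a + x j) - f a))\<^sup>2) \<le> 2 * C * (sqrt 3 * exp 1 * c * r * w)"
proof (rule l2_norm_le_of_sums[OF J, where y = "\<lambda>k j. P (Suc k) (x j)"])
  fix j assume j: "j \<in> J"
  have "\<bar>t j i\<bar> \<le> w" if "i < n" for i
    using order_trans[OF member_le_sum[of j J "\<lambda>j. (t j i)\<^sup>2"] column[OF that]] j J w
    by (simp add: power2_le_iff_abs_le)
  then have "norm (x j) \<le> r * w"
    using norm_sum_le_of_cube[OF cube _ w, of "t j"] coords[OF j] by simp
  then show "(\<lambda>k. P (Suc k) (x j)) sums (f (a + x j) - f a)"
    using small(1) by (intro P_sums) simp
next
  fix k
  have hom: "cont_hom_poly (Suc k) (P (Suc k))"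
    by (rule P) simp
  have bound: "norm (P (Suc k) y) \<le> C * c ^ Suc k * norm y ^ Suc k" for y
    by (rule P_bound) simp
  show "(\<Sum>j\<in>J. inner (P (Suc k) (x j)) (f (a + x j) - f a))
      \<le> C * (sqrt 3 * exp 1 * c * r * w) ^ Suc k * sqrt (\<Sum>j\<in>J. (norm (f (a + x j) - f a))\<^sup>2)"
    by (rule homogeneous_polynomial_inner_sum_le[OF hom _ bound C c J w cube coords column]) simp
qed (use C c w small(2) cube[of "\<lambda>_. 0"] in auto)

text \<open>The radius \<open>\<epsilon>\<close> is chosen so that the \<open>x\<^sub>j\<close> lie in the ball where the power series converges and
  the degree-\<open>k\<close> estimates decay geometrically with ratio at most \<open>1/2\<close>; the exponent in the
  definition of almost summing maps is \<open>1\<close>.\<close>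

lemma analytic_at_pt_imp_almost_2_summing_at:
  fixes f :: "'a::real_normed_vector \<Rightarrow> 'b::real_inner"
  assumes "L_infty_space TYPE('a)" and "analytic_at_pt f a"
  shows "almost_2_summing_at f a"
proof -
  obtain lam where lam: "lam \<ge> 1"
    and L: "\<And>M :: 'a set. fin_dim_subspace M \<Longrightarrow> \<exists>N. fin_dim_subspace N \<and> M \<subseteq> N \<and> close_to_linf lam N"
    using assms(1) unfolding L_infty_space_def by blast
  obtain P C c \<delta> where \<delta>: "\<delta> > 0" and C: "C \<ge> 0" and c: "c > 0"
    and P: "\<And>k. k \<ge> 1 \<Longrightarrow> cont_hom_poly k (P k)"
    and P_bound: "\<And>k x. k \<ge> 1 \<Longrightarrow> norm (P k x) \<le> C * c ^ k * norm x ^ k"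
    and P_sums: "\<And>x. norm x < \<delta> \<Longrightarrow> (\<lambda>k. P (Suc k) x) sums (f (a + x) - f a)"
    by (rule analytic_at_pt_normalized[OF assms(2)]) (rule that)
  define B where "B = sqrt 3 * exp 1 * c * lam"
  define \<epsilon> where "\<epsilon> = min (\<delta> / lam) (1 / (2 * B))"
  define K where "K = 2 * C * B + 1"
  have B: "B > 0" unfolding B_def using c lam by simp
  have "sqrt (integral {0..1} (\<lambda>t. (norm (\<Sum>j\<in>{1..m}. rademacher j t *\<^sub>R (f (a + x j) - f a)))\<^sup>2))
      \<le> K * weak2_norm m x powr 1" if "weak2_norm m x < \<epsilon>" for m x
  proof -
    define W where "W = weak2_norm m x"
    have W: "0 \<le> W" "lam * W < \<delta>" "B * W \<le> 1 / 2"
      using weak2_norm_nonneg[of m x] that lam B unfolding W_def \<epsilon>_def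
      by (auto simp: field_simps)
    have "fin_dim_subspace (span (x ` {1..m}))"
      unfolding fin_dim_subspace_def by blast
    then obtain N where N: "subspace N" "span (x ` {1..m}) \<subseteq> N" "close_to_linf lam N"
      using L unfolding fin_dim_subspace_def by blast
    have xN: "x j \<in> N" if "j \<in> {1..m}" for j
      using N(2) span_base[of "x j"] that by blast
    have "lam \<ge> 0" using lam by simp
    then show ?thesis
    proof (rule close_to_linf_weak2_coordinates[OF N(3,1) _ xN])
      fix n u t
      assume cube: "\<And>s. (\<And>i. i < (n::nat) \<Longrightarrow> \<bar>s i\<bar> \<le> 1) \<Longrightarrow> norm (\<Sum>i<n. s i *\<^sub>R u i) \<le> lam"
        and coords: "\<And>j. j \<in> {1..m} \<Longrightarrow> x j = (\<Sum>i<n. t j i *\<^sub>R u i)"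
        and "\<And>i. i < n \<Longrightarrow> (\<Sum>j\<in>{1..m}. (t j i)\<^sup>2) \<le> (weak2_norm m x)\<^sup>2"
      note column = this(3)[folded W_def]
      have "sqrt (\<Sum>j\<in>{1..m}. (norm (f (a + x j) - f a))\<^sup>2) \<le> 2 * C * (B * W)"
        using analytic_series_l2_le[OF P P_bound P_sums C _ _ W(1) cube coords column] c W
        by (simp add: B_def mult_ac)
      also have "\<dots> \<le> K * W"
        unfolding K_def using W(1) by (simp add: algebra_simps)
      finally show ?thesis
        using W(1) unfolding W_def by (simp add: integral_norm_rademacher_sum_squared)
    qed
  qed
  moreover have "\<epsilon> > 0" "K > 0"
    unfolding \<epsilon>_def K_def using \<delta> lam B C by (auto intro: add_nonneg_pos)
  ultimately show ?thesis
    unfolding almost_2_summing_at_def by (intro exI[of _ K] exI[of _ \<epsilon>] exI[of _ 1]) auto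
qed

lemma entire_map_imp_analytic_at_pt: "entire_map f \<Longrightarrow> analytic_at_pt f a"
  unfolding entire_map_def analytic_at_pt_def by (metis zero_less_one)

theorem mainTheorem7:
  fixes f :: "'a::banach \<Rightarrow> 'b::{real_inner, complete_space}"
  assumes "L_infty_space TYPE('a)"
  shows "(\<forall>a. analytic_at_pt f a \<longrightarrow> almost_2_summing_at f a)
         \<and> (entire_map f \<longrightarrow> (\<forall>a. almost_2_summing_at f a))"
  using analytic_at_pt_imp_almost_2_summing_at[OF assms] entire_map_imp_analytic_at_pt by blast

end
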